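(* Let $m_1\ge1$, $\mathcal X=[-1,1]^{m_1}$, $\mathcal Y\subseteq\mathbb{R}$, $\mathcal Z=\mathcal X\times\mathcal Y$, and let $\mathcal D$ be a probability distribution on $\mathcal Z$. Let $d:\mathcal Y\times\mathbb{R}\to[0,1]$ satisfy $|d(y,u)-d(y,u')|\le|u-u'|$ for all $y,u,u'$. Fix $q\in[1,\infty]$, $c,c_o>0$, an integer $k\ge0$, integers $d_1,\dots,d_k\ge1$, $\mathbf d=(m_1,d_1,\dots,d_k,1)$, $\delta\in(0,1)$, and assume $c^k\le a_0$ for some $a_0\ge1$. For $f\in\mathcal{N}^{k,\mathbf d}_{1,q,c,c_o}$ let $h_f(x,y)=d(y,f(x))$. Let $S=\{z_1,\dots,z_n\}$ be $n$ i.i.d. samples from $\mathcal D$. Then with probability at least $1-\delta$ over $S$, for all $f\in\mathcal{N}^{k,\mathbf d}_{1,q,c,c_o}$, $$\mathbb{E}_{z\sim\mathcal D}[h_f(z)]\le\frac1n\sum_{i=1}^nh_f(z_i)+\sqrt{\frac{\log(1/\delta)}{2n}}+\frac{4c_oa_0}{\sqrt n}\sqrt{k+2+\log(m_1+1)}.$$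
   Context: $\sigma(u)=\max(u,0)$, applied coordinatewise. For a real $s_1\times s_2$ matrix $A=(a_{ij})$: $\|A\|_{p,q}=\big(\sum_{j=1}^{s_2}(\sum_{i=1}^{s_1}|a_{ij}|^p)^{q/p}\big)^{1/q}$ for $q<\infty$, $\|A\|_{p,\infty}=\max_j(\sum_{i}|a_{ij}|^p)^{1/p}$. An affine map $T:\mathbb{R}^{a}\to\mathbb{R}^{b}$, $T(u)=W^Tu+B$, is identified with $\tilde V\in\mathbb{R}^{(a+1)\times b}$ whose first row is $B^T$ and remaining rows form $W$; $\|T\|_{p,q}:=\|\tilde V\|_{p,q}$. For $k\ge0$, width vector $\mathbf d=(d_0,\dots,d_{k+1})$ and $c,c_o>0$, $\mathcal{N}^{k,\mathbf d}_{p,q,c,c_o}$ is the set of all $f=T_{k+1}\circ\sigma\circ T_k\circ\cdots\circ\sigma\circ T_1:\mathbb{R}^{d_0}\to\mathbb{R}^{d_{k+1}}$ with affine $T_i:\mathbb{R}^{d_{i-1}}\to\mathbb{R}^{d_i}$, $\|T_i\|_{p,q}=c$ for $i\le k$ and $\|T_{k+1}\|_{p,q}\le c_o$. *)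

theory Defs
  imports "HOL-Analysis.Analysis" "HOL-Probability.Probability"
begin

text \<open>Vectors of R^a are represented as functions nat => real (only coordinates < a matter).
An affine map T : R^a -> R^b is represented by its (a+1) x b matrix V (V 0 j = B_j,
V (i+1) j = W_ij), given as a function nat => nat => real.\<close>

type_synonym layer = "nat \<Rightarrow> nat \<Rightarrow> real"

definition affine_apply :: "layer \<Rightarrow> nat \<Rightarrow> (nat \<Rightarrow> real) \<Rightarrow> (nat \<Rightarrow> real)" where
  "affine_apply V a u = (\<lambda>j. V 0 j + (\<Sum>i<a. V (Suc i) j * u i))"

definition relu :: "(nat \<Rightarrow> real) \<Rightarrow> (nat \<Rightarrow> real)" where
  "relu u = (\<lambda>j. max (u j) 0)"

definition pq_norm :: "real \<Rightarrow> ereal \<Rightarrow> nat \<Rightarrow> nat \<Rightarrow> layer \<Rightarrow> real" where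
  "pq_norm p q a b V =
     (let col = (\<lambda>j. (\<Sum>i\<le>a. \<bar>V i j\<bar> powr p) powr (1 / p)) in
      if q = \<infinity> then Max (col ` {..<b})
      else (\<Sum>j<b. col j powr real_of_ereal q) powr (1 / real_of_ereal q))"

fun hidden :: "nat list \<Rightarrow> layer list \<Rightarrow> (nat \<Rightarrow> real) \<Rightarrow> (nat \<Rightarrow> real)" where
  "hidden (a # ds) (V # Vs) x = hidden ds Vs (relu (affine_apply V a x))"
| "hidden _ _ x = x"

definition relu_nets ::
  "nat \<Rightarrow> nat list \<Rightarrow> real \<Rightarrow> ereal \<Rightarrow> real \<Rightarrow> real \<Rightarrow> ((nat \<Rightarrow> real) \<Rightarrow> (nat \<Rightarrow> real)) set" where
  "relu_nets k ds p q c co =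
     {F. \<exists>Vs. length Vs = k + 1 \<and> length ds = k + 2 \<and>
          (\<forall>i<k. pq_norm p q (ds ! i) (ds ! Suc i) (Vs ! i) = c) \<and>
          pq_norm p q (ds ! k) (ds ! Suc k) (Vs ! k) \<le> co \<and>
          F = (\<lambda>x. affine_apply (Vs ! k) (ds ! k) (hidden ds (take k Vs) x))}"

definition cube :: "nat \<Rightarrow> (nat \<Rightarrow> real) set" where
  "cube m = {x. (\<forall>i<m. \<bar>x i\<bar> \<le> 1) \<and> (\<forall>i\<ge>m. x i = 0)}"

end

theory Submission
  imports Defs
begin

text \<open>
  The class is peeled off layer by layer, in the manner of Golowich, Rakhlin and Shamir. For the
  exponential moment of the Rademacher supremum, an affine layer whose weight columns have
  \<open>\<ell>\<^sub>1\<close>-norm at most \<open>c\<close> costs a factor \<open>2\<close> and an additive Gaussian term, while the ReLU costs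
  nothing by the contraction principle of Ledoux and Talagrand; after \<open>k + 1\<close> layers Jensen's
  inequality and an optimal choice of the exponent bound the empirical Rademacher complexity by
  \<open>2 c\<^sub>o a\<^sub>0 \<surd>(k + 2 + log (m\<^sub>1 + 1)) / \<surd>n\<close>. Contraction again passes from the network outputs to the
  \<open>1\<close>-Lipschitz loss. Symmetrization with a ghost sample bounds the expected uniform deviation of
  empirical from true risk by twice the Rademacher complexity, and McDiarmid's inequality makes the
  bound hold with probability \<open>1 - \<delta>\<close>. All this is done for a countable dense set of parameters;
  it extends to every network because both sides of the bound depend continuously on the weights.
\<close>

section \<open>Averages over random signs\<close>

text \<open>\<open>sign_avg n \<Phi>\<close> is the expectation of \<open>\<Phi> \<epsilon>\<close> for a uniformly random sign vector
  \<open>\<epsilon> \<in> {-1,1}\<^sup>n\<close>; the coordinates \<open>\<ge> n\<close> of \<open>\<epsilon>\<close> are \<open>0\<close>.\<close>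

fun sign_avg :: "nat \<Rightarrow> ((nat \<Rightarrow> real) \<Rightarrow> real) \<Rightarrow> real" where
  "sign_avg 0 \<Phi> = \<Phi> (\<lambda>_. 0)"
| "sign_avg (Suc n) \<Phi> = (sign_avg n (\<lambda>e. \<Phi> (e(n := 1))) + sign_avg n (\<lambda>e. \<Phi> (e(n := -1)))) / 2"

definition sign_vector :: "nat \<Rightarrow> (nat \<Rightarrow> real) \<Rightarrow> bool" where
  "sign_vector n e \<longleftrightarrow> (\<forall>i<n. e i = 1 \<or> e i = -1)"

lemma sign_vector_upd: "sign_vector n e \<Longrightarrow> s = 1 \<or> s = -1 \<Longrightarrow> sign_vector (Suc n) (e(n := s))"
  unfolding sign_vector_def by (auto simp: less_Suc_eq)

lemma sign_vector_uminus: "sign_vector n e \<Longrightarrow> sign_vector n (\<lambda>i. - e i)"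
  unfolding sign_vector_def by force

lemma abs_sign_vector: "sign_vector n e \<Longrightarrow> i < n \<Longrightarrow> \<bar>e i\<bar> = 1"
  unfolding sign_vector_def by auto

lemma sign_avg_mono:
  "(\<And>e. sign_vector n e \<Longrightarrow> \<Phi> e \<le> \<Psi> e) \<Longrightarrow> sign_avg n \<Phi> \<le> sign_avg n \<Psi>"
proof (induction n arbitrary: \<Phi> \<Psi>)
  case 0
  then show ?case by (simp add: sign_vector_def)
next
  case (Suc n)
  have "sign_avg n (\<lambda>e. \<Phi> (e(n := s))) \<le> sign_avg n (\<lambda>e. \<Psi> (e(n := s)))" if "s = 1 \<or> s = -1" for s
    by (rule Suc.IH) (intro Suc.prems sign_vector_upd that)
  from this[of 1] this[of "-1"] show ?case by simp
qed

lemma sign_avg_cong: "(\<And>e. sign_vector n e \<Longrightarrow> \<Phi> e = \<Psi> e) \<Longrightarrow> sign_avg n \<Phi> = sign_avg n \<Psi>"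
  by (rule antisym; rule sign_avg_mono; simp)

lemma sign_avg_const [simp]: "sign_avg n (\<lambda>_. c) = c"
  by (induction n) auto

lemma sign_avg_add: "sign_avg n (\<lambda>e. \<Phi> e + \<Psi> e) = sign_avg n \<Phi> + sign_avg n \<Psi>"
  by (induction n arbitrary: \<Phi> \<Psi>) (auto simp: field_simps)

lemma sign_avg_cmult: "sign_avg n (\<lambda>e. a * \<Phi> e) = a * sign_avg n \<Phi>"
  by (induction n arbitrary: \<Phi>) (auto simp: field_simps)

lemma sign_avg_sum: "sign_avg n (\<lambda>e. \<Sum>l\<in>L. \<Phi> l e) = (\<Sum>l\<in>L. sign_avg n (\<Phi> l))"
  by (induction L rule: infinite_finite_induct) (auto simp: sign_avg_add)

lemma sign_avg_uminus: "sign_avg n (\<lambda>e. \<Phi> (\<lambda>i. - e i)) = sign_avg n \<Phi>"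
proof (induction n arbitrary: \<Phi>)
  case 0
  then show ?case by simp
next
  case (Suc n)
  have flip: "(\<lambda>i. - (e(n := s)) i) = (\<lambda>i. - e i)(n := - s)" for e and s :: real
    by auto
  have "sign_avg n (\<lambda>e. \<Phi> (\<lambda>i. - (e(n := s)) i)) = sign_avg n (\<lambda>e. \<Phi> (e(n := - s)))" for s :: real
    using Suc.IH[of "\<lambda>e. \<Phi> (e(n := - s))"] by (simp only: flip)
  from this[of 1] this[of "-1"] show ?case by simp
qed

lemma sign_avg_nonneg: "(\<And>e. sign_vector n e \<Longrightarrow> 0 \<le> \<Phi> e) \<Longrightarrow> 0 \<le> sign_avg n \<Phi>"
  using sign_avg_mono[of n "\<lambda>_. 0" \<Phi>] by simp

lemma sign_avg_measurable [measurable]: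
  "(\<And>e. (\<lambda>w. f e w) \<in> borel_measurable M) \<Longrightarrow> (\<lambda>w. sign_avg n (\<lambda>e. f e w)) \<in> borel_measurable M"
  by (induction n arbitrary: f) auto

lemma
  fixes M :: "'a measure"
  assumes "\<And>e. integrable M (\<lambda>w. f e w)"
  shows integrable_sign_avg: "integrable M (\<lambda>w. sign_avg n (\<lambda>e. f e w))"
    and integral_sign_avg: "(\<integral>w. sign_avg n (\<lambda>e. f e w) \<partial>M) = sign_avg n (\<lambda>e. \<integral>w. f e w \<partial>M)"
  using assms by (induction n arbitrary: f) auto

lemma exp_midpoint_le: "exp ((a + b) / 2 :: real) \<le> (exp a + exp b) / 2"
proof -
  have "convex_on UNIV exp"
    using convex_on_exp[of 1] by simp
  from convex_onD[OF this, of "1/2" a b] show ?thesis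
    by (simp add: field_simps)
qed

lemma exp_sign_avg_le: "exp (sign_avg n \<Phi>) \<le> sign_avg n (\<lambda>e. exp (\<Phi> e))"
proof (induction n arbitrary: \<Phi>)
  case 0
  then show ?case by simp
next
  case (Suc n)
  have "exp (sign_avg (Suc n) \<Phi>)
      \<le> (exp (sign_avg n (\<lambda>e. \<Phi> (e(n := 1)))) + exp (sign_avg n (\<lambda>e. \<Phi> (e(n := -1))))) / 2"
    using exp_midpoint_le by simp
  also have "\<dots> \<le> sign_avg (Suc n) (\<lambda>e. exp (\<Phi> e))"
    using Suc.IH[of "\<lambda>e. \<Phi> (e(n := 1))"] Suc.IH[of "\<lambda>e. \<Phi> (e(n := -1))"] by simp
  finally show ?case .
qed

lemma cosh_le_exp_square: "cosh (x::real) \<le> exp (x\<^sup>2 / 2)"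
proof -
  have "cosh x \<le> exp (x\<^sup>2 / 2)" if "x \<ge> 0" for x :: real
  proof -
    have "- (2*x) * (1/2) + ln (1 + (1/2) * (exp (2*x) - 1)) \<le> (2*x)\<^sup>2 / 8"
      by (rule Hoeffdings_lemma_aux) (use that in auto)
    moreover have "1 + (1/2) * (exp (2*x) - 1) = exp x * cosh x"
      by (simp add: cosh_def exp_add[symmetric] field_simps mult_exp_exp)
    moreover have "cosh x > 0"
      by (simp add: cosh_def add_pos_pos)
    ultimately have "ln (cosh x) \<le> x\<^sup>2 / 2"
      by (simp add: ln_mult power2_eq_square field_simps)
    with \<open>cosh x > 0\<close> show ?thesis
      by (metis exp_le_cancel_iff exp_ln)
  qed
  from this[of x] this[of "-x"] show ?thesis
    by (cases "x \<ge> 0") simp_all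
qed

lemma sum_lessThan_Suc_upd:
  "(\<Sum>i<Suc n. (e(n := s)) i * f i) = (\<Sum>i<n. e i * f i) + s * (f n :: real)"
proof -
  have "(\<Sum>i<n. (e(n := s)) i * f i) = (\<Sum>i<n. e i * f i)"
    by (rule sum.cong) auto
  then show ?thesis by simp
qed

lemma sign_avg_exp_sum_le: "sign_avg n (\<lambda>e. exp (\<Sum>i<n. e i * a i)) \<le> exp ((\<Sum>i<n. (a i)\<^sup>2) / 2)"
proof (induction n)
  case 0
  then show ?case by simp
next
  case (Suc n)
  have "sign_avg (Suc n) (\<lambda>e. exp (\<Sum>i<Suc n. e i * a i))
      = cosh (a n) * sign_avg n (\<lambda>e. exp (\<Sum>i<n. e i * a i))"
    by (simp add: sum_lessThan_Suc_upd exp_add sign_avg_cmult cosh_def field_simps)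
  also have "\<dots> \<le> exp ((a n)\<^sup>2 / 2) * exp ((\<Sum>i<n. (a i)\<^sup>2) / 2)"
    by (intro mult_mono cosh_le_exp_square Suc.IH) (auto intro: sign_avg_nonneg)
  also have "\<dots> = exp ((\<Sum>i<Suc n. (a i)\<^sup>2) / 2)"
    by (simp add: exp_add[symmetric] field_simps)
  finally show ?case .
qed

lemma abs_sign_sum_le:
  assumes "sign_vector n e" "\<forall>i<n. \<bar>t i\<bar> \<le> M"
  shows "\<bar>\<Sum>i<n. e i * t i\<bar> \<le> real n * M"
proof -
  have "\<bar>\<Sum>i<n. e i * t i\<bar> \<le> (\<Sum>i<n. \<bar>e i * t i\<bar>)"
    by (rule sum_abs)
  also have "\<dots> \<le> (\<Sum>i<n. M)"
    by (rule sum_mono) (use assms abs_sign_vector in \<open>auto simp: abs_mult\<close>)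
  finally show ?thesis by simp
qed

lemma sign_avg_divide: "sign_avg n (\<lambda>e. \<Phi> e / a) = sign_avg n \<Phi> / a"
  using sign_avg_cmult[of n "inverse a" \<Phi>] by (simp add: divide_inverse mult.commute)

section \<open>The contraction principle\<close>

lemma bdd_above_image_add_diff:
  fixes f g :: "'a \<Rightarrow> real"
  assumes "\<forall>t\<in>T. \<bar>f t\<bar> \<le> a" "\<forall>t\<in>T. \<bar>g t\<bar> \<le> b"
  shows "bdd_above ((\<lambda>t. f t + g t) ` T)" "bdd_above ((\<lambda>t. f t - g t) ` T)"
proof -
  have "f t + g t \<le> a + b" "f t - g t \<le> a + b" if "t \<in> T" for t
    using assms(1)[rule_format, OF that] assms(2)[rule_format, OF that] by (auto simp: abs_le_iff)
  then show "bdd_above ((\<lambda>t. f t + g t) ` T)" "bdd_above ((\<lambda>t. f t - g t) ` T)"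
    by (auto intro!: bdd_aboveI[of _ "a + b"])
qed

text \<open>The comparison inequality of Ledoux and Talagrand, reduced to a two-point
  inequality for a single sign.\<close>

lemma sign_avg_contraction:
  fixes T :: "(nat \<Rightarrow> real) set" and \<psi> :: "nat \<Rightarrow> (nat \<Rightarrow> real) \<Rightarrow> real" and G :: "real \<Rightarrow> real"
  assumes bounded: "\<forall>t\<in>T. \<forall>i<n. \<bar>t i\<bar> \<le> M \<and> \<bar>\<psi> i t\<bar> \<le> M"
    and two_point: "\<And>i A K. i < n \<Longrightarrow> \<forall>t\<in>T. \<bar>A t\<bar> \<le> K \<Longrightarrow>
       G (Sup ((\<lambda>t. A t + \<psi> i t) ` T)) + G (Sup ((\<lambda>t. A t - \<psi> i t) ` T))
       \<le> G (Sup ((\<lambda>t. A t + t i) ` T)) + G (Sup ((\<lambda>t. A t - t i) ` T))"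
    and B: "\<forall>t\<in>T. \<bar>B t\<bar> \<le> K"
  shows "sign_avg n (\<lambda>e. G (Sup ((\<lambda>t. (\<Sum>i<n. e i * \<psi> i t) + B t) ` T)))
       \<le> sign_avg n (\<lambda>e. G (Sup ((\<lambda>t. (\<Sum>i<n. e i * t i) + B t) ` T)))"
  using bounded two_point B
proof (induction n arbitrary: B K)
  case 0
  then show ?case by simp
next
  case (Suc n)
  define L where "L s = sign_avg n (\<lambda>e. G (Sup ((\<lambda>t. (\<Sum>i<n. e i * \<psi> i t) + (s * \<psi> n t + B t)) ` T)))"
    for s :: real
  define R where "R s = sign_avg n (\<lambda>e. G (Sup ((\<lambda>t. (\<Sum>i<n. e i * t i) + (s * \<psi> n t + B t)) ` T)))"
    for s :: real
  define A where "A e t = (\<Sum>i<n. e i * t i) + B t" for e t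
  have LR: "L s \<le> R s" if "s = 1 \<or> s = -1" for s
    unfolding L_def R_def
  proof (rule Suc.IH)
    show "\<forall>t\<in>T. \<bar>s * \<psi> n t + B t\<bar> \<le> M + K"
    proof
      fix t assume "t \<in> T"
      then have "\<bar>\<psi> n t\<bar> \<le> M" "\<bar>B t\<bar> \<le> K"
        using Suc.prems(1,3) by auto
      moreover have "\<bar>s * \<psi> n t\<bar> = \<bar>\<psi> n t\<bar>"
        using that by auto
      ultimately show "\<bar>s * \<psi> n t + B t\<bar> \<le> M + K"
        using abs_triangle_ineq[of "s * \<psi> n t" "B t"] by linarith
    qed
  qed (use Suc.prems in auto)
  have R_A: "R s = sign_avg n (\<lambda>e. G (Sup ((\<lambda>t. A e t + s * \<psi> n t) ` T)))" for s
    unfolding R_def A_def by (simp add: add_ac)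
  have "R 1 + R (-1) = sign_avg n (\<lambda>e. G (Sup ((\<lambda>t. A e t + \<psi> n t) ` T)) + G (Sup ((\<lambda>t. A e t - \<psi> n t) ` T)))"
    unfolding R_A sign_avg_add by simp
  also have "\<dots> \<le> sign_avg n (\<lambda>e. G (Sup ((\<lambda>t. A e t + t n) ` T)) + G (Sup ((\<lambda>t. A e t - t n) ` T)))"
  proof (rule sign_avg_mono, rule Suc.prems(2))
    fix e assume e: "sign_vector n e"
    show "\<forall>t\<in>T. \<bar>A e t\<bar> \<le> real n * M + K"
    proof
      fix t assume "t \<in> T"
      then have "\<bar>\<Sum>i<n. e i * t i\<bar> \<le> real n * M" "\<bar>B t\<bar> \<le> K"
        using abs_sign_sum_le[OF e, of t] Suc.prems(1,3) by auto
      then show "\<bar>A e t\<bar> \<le> real n * M + K"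
        unfolding A_def using abs_triangle_ineq[of "\<Sum>i<n. e i * t i" "B t"] by linarith
    qed
  qed simp
  also have "\<dots> = 2 * sign_avg (Suc n) (\<lambda>e. G (Sup ((\<lambda>t. (\<Sum>i<Suc n. e i * t i) + B t) ` T)))"
    unfolding A_def sign_avg.simps sum_lessThan_Suc_upd sign_avg_add by (simp add: add_ac add_diff_eq)
  finally have "R 1 + R (-1) \<le> \<dots>" .
  moreover have "sign_avg (Suc n) (\<lambda>e. G (Sup ((\<lambda>t. (\<Sum>i<Suc n. e i * \<psi> i t) + B t) ` T))) = (L 1 + L (-1)) / 2"
    unfolding L_def sign_avg.simps sum_lessThan_Suc_upd by (simp add: algebra_simps)
  ultimately show ?case
    using LR[of 1] LR[of "-1"] by simp
qed

lemma two_point_lipschitz: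
  fixes T :: "(nat \<Rightarrow> real) set"
  assumes T: "T \<noteq> {}" and bA: "\<forall>t\<in>T. \<bar>A t\<bar> \<le> K"
    and bounded: "\<forall>t\<in>T. \<bar>t i\<bar> \<le> M \<and> \<bar>\<psi> t\<bar> \<le> M"
    and lip: "\<forall>s\<in>T. \<forall>t\<in>T. \<psi> s - \<psi> t \<le> \<bar>s i - t i\<bar>"
  shows "Sup ((\<lambda>t. A t + \<psi> t) ` T) + Sup ((\<lambda>t. A t - \<psi> t) ` T)
       \<le> Sup ((\<lambda>t. A t + t i) ` T) + Sup ((\<lambda>t. A t - t i) ` T)" (is "?a + ?b \<le> ?R")
proof -
  have bdd: "bdd_above ((\<lambda>t. A t + \<psi> t) ` T)" "bdd_above ((\<lambda>t. A t - \<psi> t) ` T)"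
     "bdd_above ((\<lambda>t. A t + t i) ` T)" "bdd_above ((\<lambda>t. A t - t i) ` T)"
    using bdd_above_image_add_diff[of T A K \<psi> M] bdd_above_image_add_diff[of T A K "\<lambda>t. t i" M]
      bA bounded by auto
  have pair: "(A s + \<psi> s) + (A t - \<psi> t) \<le> ?R" if "s \<in> T" "t \<in> T" for s t
  proof -
    have "(A s + \<psi> s) + (A t - \<psi> t) \<le> (A s + s i) + (A t - t i) \<or>
          (A s + \<psi> s) + (A t - \<psi> t) \<le> (A t + t i) + (A s - s i)"
      using lip that by (auto simp: abs_if split: if_splits)
    moreover have "(A s + s i) + (A t - t i) \<le> ?R" "(A t + t i) + (A s - s i) \<le> ?R"
      by (intro add_mono cSup_upper bdd; use that in simp)+
    ultimately show ?thesis by linarith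
  qed
  have "?a \<le> ?R - (A t - \<psi> t)" if "t \<in> T" for t
    using pair that T by (intro cSUP_least) (auto simp: algebra_simps)
  then have "?b \<le> ?R - ?a"
    using T by (intro cSUP_least) (auto simp: algebra_simps)
  then show ?thesis by simp
qed

lemma exp_Sup_add_le:
  fixes X Y :: "real set"
  assumes X: "X \<noteq> {}" "bdd_above X" and Y: "Y \<noteq> {}" "bdd_above Y" and "\<mu> \<ge> 0"
    and pointwise: "\<forall>x\<in>X. \<forall>y\<in>Y. exp (\<mu> * x) + exp (\<mu> * y) \<le> R"
  shows "exp (\<mu> * Sup X) + exp (\<mu> * Sup Y) \<le> R"
proof -
  define f where "f x = exp (\<mu> * x)" for x
  have "mono f"
    using \<open>\<mu> \<ge> 0\<close> by (auto intro!: monoI mult_left_mono simp: f_def)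
  moreover have "continuous (at_left (Sup S)) f" for S
    unfolding f_def by (intro continuous_intros)
  ultimately have f_Sup: "f (Sup S) = Sup (f ` S)" if "S \<noteq> {}" "bdd_above S" for S
    using continuous_at_Sup_mono that by blast
  have "Sup (f ` X) \<le> R - f y" if "y \<in> Y" for y
    using X pointwise that by (intro cSUP_least) (auto simp: f_def le_diff_eq)
  then have "Sup (f ` Y) \<le> R - Sup (f ` X)"
    using Y by (intro cSUP_least) (auto simp: le_diff_eq add.commute)
  then show ?thesis
    using f_Sup[OF X] f_Sup[OF Y] by (simp add: f_def)
qed

lemma exp_relu_two_point:
  fixes \<mu> a b x y U V :: real
  assumes "\<mu> \<ge> 0" and "a + x \<le> U" "a - x \<le> V" "b + y \<le> U" "b - y \<le> V"
  shows "exp (\<mu> * (a + max x 0)) + exp (\<mu> * (b - max y 0)) \<le> exp (\<mu> * U) + exp (\<mu> * V)"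
proof -
  have exp_mono': "exp (\<mu> * u) \<le> exp (\<mu> * v)" if "u \<le> v" for u v
    using \<open>\<mu> \<ge> 0\<close> that by (simp add: mult_left_mono)
  have midpoint: "exp (\<mu> * u) + exp (\<mu> * u) \<le> exp (\<mu> * (u + z)) + exp (\<mu> * (u - z))" for u z
    using exp_midpoint_le[of "\<mu> * (u + z)" "\<mu> * (u - z)"] by (simp add: algebra_simps)
  consider "x \<ge> 0" | "x < 0" "y \<ge> 0" | "x < 0" "y < 0" "b \<le> a" | "x < 0" "y < 0" "a \<le> b"
    by linarith
  then show ?thesis
  proof cases
    case 1
    then show ?thesis
      using assms by (intro add_mono exp_mono') auto
  next
    case 2
    then have "exp (\<mu> * (a + max x 0)) + exp (\<mu> * (b - max y 0)) = exp (\<mu> * (b - y)) + exp (\<mu> * a)"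
      by simp
    also have "\<dots> \<le> exp (\<mu> * U) + exp (\<mu> * V)"
      using assms 2 by (intro add_mono exp_mono') auto
    finally show ?thesis .
  next
    case 3
    then have "exp (\<mu> * (a + max x 0)) + exp (\<mu> * (b - max y 0)) \<le> exp (\<mu> * a) + exp (\<mu> * a)"
      using exp_mono'[of b a] by simp
    also have "\<dots> \<le> exp (\<mu> * U) + exp (\<mu> * V)"
      using midpoint[of a x] assms by (smt (verit) exp_mono')
    finally show ?thesis .
  next
    case 4
    then have "exp (\<mu> * (a + max x 0)) + exp (\<mu> * (b - max y 0)) \<le> exp (\<mu> * b) + exp (\<mu> * b)"
      using exp_mono'[of a b] by simp
    also have "\<dots> \<le> exp (\<mu> * U) + exp (\<mu> * V)"
      using midpoint[of b y] assms by (smt (verit) exp_mono')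
    finally show ?thesis .
  qed
qed

lemma two_point_relu:
  fixes T :: "(nat \<Rightarrow> real) set"
  assumes T: "T \<noteq> {}" and bA: "\<forall>t\<in>T. \<bar>A t\<bar> \<le> K" and bT: "\<forall>t\<in>T. \<bar>t i\<bar> \<le> M" and "\<mu> \<ge> 0"
  shows "exp (\<mu> * Sup ((\<lambda>t. A t + max (t i) 0) ` T)) + exp (\<mu> * Sup ((\<lambda>t. A t - max (t i) 0) ` T))
       \<le> exp (\<mu> * Sup ((\<lambda>t. A t + t i) ` T)) + exp (\<mu> * Sup ((\<lambda>t. A t - t i) ` T))"
proof (rule exp_Sup_add_le)
  have "\<forall>t\<in>T. \<bar>max (t i) 0\<bar> \<le> M"
    using bT by auto
  from bdd_above_image_add_diff[OF bA this]
  show "bdd_above ((\<lambda>t. A t + max (t i) 0) ` T)" "bdd_above ((\<lambda>t. A t - max (t i) 0) ` T)" .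
  have "bdd_above ((\<lambda>t. A t + t i) ` T)" "bdd_above ((\<lambda>t. A t - t i) ` T)"
    using bdd_above_image_add_diff[OF bA bT] by blast+
  then show "\<forall>x\<in>(\<lambda>t. A t + max (t i) 0) ` T. \<forall>y\<in>(\<lambda>t. A t - max (t i) 0) ` T.
      exp (\<mu> * x) + exp (\<mu> * y)
      \<le> exp (\<mu> * Sup ((\<lambda>t. A t + t i) ` T)) + exp (\<mu> * Sup ((\<lambda>t. A t - t i) ` T))"
    using \<open>\<mu> \<ge> 0\<close> by (auto intro!: exp_relu_two_point cSup_upper)
qed (use T \<open>\<mu> \<ge> 0\<close> in auto)

lemma sign_avg_Sup_lipschitz_le:
  fixes T :: "(nat \<Rightarrow> real) set" and \<phi> :: "nat \<Rightarrow> real \<Rightarrow> real"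
  assumes "T \<noteq> {}" "\<forall>t\<in>T. \<forall>i<n. \<bar>t i\<bar> \<le> M" "\<forall>i<n. \<forall>u. \<bar>\<phi> i u\<bar> \<le> M"
    and lip: "\<forall>i<n. \<forall>u v. \<bar>\<phi> i u - \<phi> i v\<bar> \<le> \<bar>u - v\<bar>"
  shows "sign_avg n (\<lambda>e. Sup ((\<lambda>t. \<Sum>i<n. e i * \<phi> i (t i)) ` T))
       \<le> sign_avg n (\<lambda>e. Sup ((\<lambda>t. \<Sum>i<n. e i * t i) ` T))"
proof -
  have "sign_avg n (\<lambda>e. id (Sup ((\<lambda>t. (\<Sum>i<n. e i * \<phi> i (t i)) + 0) ` T)))
      \<le> sign_avg n (\<lambda>e. id (Sup ((\<lambda>t. (\<Sum>i<n. e i * t i) + 0) ` T)))"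
  proof (rule sign_avg_contraction[where K = 0 and M = M])
    show "\<forall>t\<in>T. \<forall>i<n. \<bar>t i\<bar> \<le> M \<and> \<bar>\<phi> i (t i)\<bar> \<le> M"
      using assms(2,3) by auto
    fix i and A :: "(nat \<Rightarrow> real) \<Rightarrow> real" and K :: real
    assume "i < n" "\<forall>t\<in>T. \<bar>A t\<bar> \<le> K"
    with assms show "id (Sup ((\<lambda>t. A t + \<phi> i (t i)) ` T)) + id (Sup ((\<lambda>t. A t - \<phi> i (t i)) ` T))
       \<le> id (Sup ((\<lambda>t. A t + t i) ` T)) + id (Sup ((\<lambda>t. A t - t i) ` T))"
      unfolding id_def by (intro two_point_lipschitz[where M = M]) (auto simp: abs_le_iff)
  qed simp
  then show ?thesis
    by simp
qed

section \<open>Rademacher complexity of layered ReLU classes\<close>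

text \<open>\<open>l1_affine c N\<close> collects the neurons \<open>w\<^sub>0 + \<Sum>\<^sub>l w\<^sub>l\<^sub>+\<^sub>1 g\<^sub>l\<close> with \<open>g\<^sub>l \<in> N\<close> whose weight
  column, bias included, has \<open>\<ell>\<^sub>1\<close>-norm at most \<open>c\<close>; for \<open>q \<ge> 1\<close> this holds for every column of a
  layer of \<open>(1, q)\<close>-norm \<open>c\<close>.\<close>

definition l1_affine :: "real \<Rightarrow> (nat \<Rightarrow> real) set \<Rightarrow> (nat \<Rightarrow> real) set" where
  "l1_affine c N = {v. \<exists>a w g. (\<Sum>l\<le>a. \<bar>w l\<bar>) \<le> c \<and> (\<forall>l<a. g l \<in> N) \<and>
               v = (\<lambda>i. w 0 + (\<Sum>l<a. w (Suc l) * g l i))}"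

definition coords_bounded :: "nat \<Rightarrow> (nat \<Rightarrow> real) set \<Rightarrow> real \<Rightarrow> bool" where
  "coords_bounded n N M \<longleftrightarrow> (\<forall>g\<in>N. \<forall>i<n. \<bar>g i\<bar> \<le> M)"

definition exp_rademacher :: "nat \<Rightarrow> (nat \<Rightarrow> real) set \<Rightarrow> real \<Rightarrow> real" where
  "exp_rademacher n N \<mu> = sign_avg n (\<lambda>e. exp (\<mu> * Sup ((\<lambda>g. \<Sum>i<n. e i * g i) ` N)))"

lemma zero_in_l1_affine: "c \<ge> 0 \<Longrightarrow> (\<lambda>i. 0) \<in> l1_affine c N"
  unfolding l1_affine_def by (rule CollectI, rule exI[of _ 0], rule exI[of _ "\<lambda>_. 0"]) auto

lemma l1_weighted_sum_le:
  fixes w b :: "nat \<Rightarrow> real"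
  assumes "\<bar>b 0\<bar> \<le> Q" "\<forall>l<a. \<bar>b (Suc l)\<bar> \<le> Q"
  shows "\<bar>w 0 * b 0 + (\<Sum>l<a. w (Suc l) * b (Suc l))\<bar> \<le> (\<Sum>l\<le>a. \<bar>w l\<bar>) * Q"
proof -
  have "\<bar>w l * b l\<bar> \<le> \<bar>w l\<bar> * Q" if "l \<le> a" for l
    using assms that by (cases l) (auto simp: abs_mult intro: mult_left_mono)
  then have "\<bar>\<Sum>l\<le>a. w l * b l\<bar> \<le> (\<Sum>l\<le>a. \<bar>w l\<bar> * Q)"
    by (intro order_trans[OF sum_abs] sum_mono) auto
  then show ?thesis
    by (simp add: sum.atMost_shift sum_distrib_right distrib_right)
qed

lemma coords_bounded_l1_affine:
  assumes "coords_bounded n N M" "c \<ge> 0"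
  shows "coords_bounded n (l1_affine c N) (c * max 1 M)"
  unfolding coords_bounded_def
proof (intro ballI allI impI)
  fix v i assume "v \<in> l1_affine c N" and i: "i < n"
  then obtain a w g where w: "(\<Sum>l\<le>a. \<bar>w l\<bar>) \<le> c" "\<forall>l<a. g l \<in> N"
     and v: "v = (\<lambda>i. w 0 + (\<Sum>l<a. w (Suc l) * g l i))"
    unfolding l1_affine_def by auto
  have "\<bar>v i\<bar> \<le> (\<Sum>l\<le>a. \<bar>w l\<bar>) * max 1 M"
    using l1_weighted_sum_le[of "case_nat 1 (\<lambda>l. g l i)" "max 1 M" a w] w(2) assms(1) i
    unfolding v coords_bounded_def by force
  also have "\<dots> \<le> c * max 1 M"
    using w by (intro mult_right_mono) auto
  finally show "\<bar>v i\<bar> \<le> c * max 1 M" .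
qed

lemma coords_bounded_relu: "coords_bounded n N M \<Longrightarrow> M \<ge> 0 \<Longrightarrow> coords_bounded n (relu ` N) M"
  unfolding coords_bounded_def relu_def by force

lemma bdd_above_sign_sum:
  "coords_bounded n N M \<Longrightarrow> sign_vector n e \<Longrightarrow> bdd_above ((\<lambda>g. \<Sum>i<n. e i * g i) ` N)"
  unfolding coords_bounded_def using abs_sign_sum_le[of n e]
  by (intro bdd_aboveI[of _ "real n * M"]) (force simp: abs_le_iff)

lemma Sup_sign_sum_l1_affine_le:
  assumes N: "N \<noteq> {}" "coords_bounded n N M" and e: "sign_vector n e" and c: "c \<ge> 0"
  shows "Sup ((\<lambda>g. \<Sum>i<n. e i * g i) ` l1_affine c N) \<le>
     c * max \<bar>\<Sum>i<n. e i\<bar> (max (Sup ((\<lambda>g. \<Sum>i<n. e i * g i) ` N)) (Sup ((\<lambda>g. \<Sum>i<n. - e i * g i) ` N)))"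
    (is "_ \<le> c * ?Q")
proof (rule cSup_least)
  show "(\<lambda>g. \<Sum>i<n. e i * g i) ` l1_affine c N \<noteq> {}"
    using zero_in_l1_affine[OF c] by blast
  fix x assume "x \<in> (\<lambda>g. \<Sum>i<n. e i * g i) ` l1_affine c N"
  then obtain a w g where w: "(\<Sum>l\<le>a. \<bar>w l\<bar>) \<le> c" "\<forall>l<a. g l \<in> N"
     and x: "x = (\<Sum>i<n. e i * (w 0 + (\<Sum>l<a. w (Suc l) * g l i)))"
    unfolding l1_affine_def by auto
  define b where "b = case_nat (\<Sum>i<n. e i) (\<lambda>l. \<Sum>i<n. e i * g l i)"
  have "x = w 0 * b 0 + (\<Sum>l<a. w (Suc l) * b (Suc l))"
    unfolding x b_def by (simp add: algebra_simps sum.distrib sum_distrib_left sum.swap[of _ "{..<n}"])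
  also have "\<dots> \<le> (\<Sum>l\<le>a. \<bar>w l\<bar>) * ?Q"
  proof (rule order_trans[OF abs_ge_self l1_weighted_sum_le])
    show "\<bar>b 0\<bar> \<le> ?Q"
      by (simp add: b_def)
    show "\<forall>l<a. \<bar>b (Suc l)\<bar> \<le> ?Q"
    proof (intro allI impI)
      fix l assume "l < a"
      then have gl: "g l \<in> N" using w by auto
      have "(\<Sum>i<n. e i * g l i) \<le> Sup ((\<lambda>g. \<Sum>i<n. e i * g i) ` N)"
        by (intro cSup_upper bdd_above_sign_sum[OF N(2) e]) (use gl in auto)
      moreover have "- (\<Sum>i<n. e i * g l i) \<le> Sup ((\<lambda>g. \<Sum>i<n. - e i * g i) ` N)"
        using cSup_upper[OF imageI[OF gl] bdd_above_sign_sum[OF N(2) sign_vector_uminus[OF e]]]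
        by (simp add: sum_negf)
      ultimately have "\<bar>\<Sum>i<n. e i * g l i\<bar>
          \<le> max (Sup ((\<lambda>g. \<Sum>i<n. e i * g i) ` N)) (Sup ((\<lambda>g. \<Sum>i<n. - e i * g i) ` N))"
        unfolding abs_le_iff by (blast intro: max.coboundedI1 max.coboundedI2)
      then show "\<bar>b (Suc l)\<bar> \<le> ?Q"
        by (simp add: b_def max.coboundedI2)
    qed
  qed
  also have "\<dots> \<le> c * ?Q"
    using w by (intro mult_right_mono) auto
  finally show "x \<le> c * ?Q" .
qed

lemma exp_rademacher_l1_affine_le:
  assumes N: "N \<noteq> {}" "coords_bounded n N M" and "\<mu> \<ge> 0" "c \<ge> 0"
  shows "exp_rademacher n (l1_affine c N) \<mu> \<le> 2 * exp (real n * (\<mu> * c)\<^sup>2 / 2) + 2 * exp_rademacher n N (\<mu> * c)"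
proof -
  define S where "S e = \<mu> * c * (\<Sum>i<n. e i)" for e :: "nat \<Rightarrow> real"
  define P where "P e = \<mu> * c * Sup ((\<lambda>g. \<Sum>i<n. e i * g i) ` N)" for e
  have "exp_rademacher n (l1_affine c N) \<mu>
      \<le> sign_avg n (\<lambda>e. exp (S e) + exp (S (\<lambda>i. - e i)) + exp (P e) + exp (P (\<lambda>i. - e i)))"
    unfolding exp_rademacher_def
  proof (rule sign_avg_mono)
    fix e assume e: "sign_vector n e"
    have "\<mu> * Sup ((\<lambda>g. \<Sum>i<n. e i * g i) ` l1_affine c N)
        \<le> max (max (S e) (S (\<lambda>i. - e i))) (max (P e) (P (\<lambda>i. - e i)))"
      using mult_left_mono[OF Sup_sign_sum_l1_affine_le[OF N e \<open>c \<ge> 0\<close>] \<open>\<mu> \<ge> 0\<close>] assms(3,4)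
      by (simp add: S_def P_def max_mult_distrib_left sum_negf abs_real_def mult.assoc split: if_splits)
    then show "exp (\<mu> * Sup ((\<lambda>g. \<Sum>i<n. e i * g i) ` l1_affine c N))
        \<le> exp (S e) + exp (S (\<lambda>i. - e i)) + exp (P e) + exp (P (\<lambda>i. - e i))"
      by (smt (verit) exp_gt_zero exp_le_cancel_iff)
  qed
  also have "\<dots> = 2 * sign_avg n (\<lambda>e. exp (\<Sum>i<n. e i * (\<mu> * c))) + 2 * exp_rademacher n N (\<mu> * c)"
    unfolding sign_avg_add sign_avg_uminus[of n "\<lambda>e. exp (S e)"] sign_avg_uminus[of n "\<lambda>e. exp (P e)"]
    by (simp add: exp_rademacher_def S_def P_def sum_distrib_left mult_ac)
  also have "sign_avg n (\<lambda>e. exp (\<Sum>i<n. e i * (\<mu> * c))) \<le> exp (real n * (\<mu> * c)\<^sup>2 / 2)"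
    using sign_avg_exp_sum_le[of n "\<lambda>_. \<mu> * c"] by simp
  finally show ?thesis by simp
qed

lemma exp_rademacher_relu_le:
  assumes N: "N \<noteq> {}" "coords_bounded n N M" and "\<mu> \<ge> 0"
  shows "exp_rademacher n (relu ` N) \<mu> \<le> exp_rademacher n N \<mu>"
proof -
  have "sign_avg n (\<lambda>e. exp (\<mu> * Sup ((\<lambda>t. (\<Sum>i<n. e i * max (t i) 0) + 0) ` N)))
      \<le> sign_avg n (\<lambda>e. exp (\<mu> * Sup ((\<lambda>t. (\<Sum>i<n. e i * t i) + 0) ` N)))"
  proof (rule sign_avg_contraction[where M = "\<bar>M\<bar>" and K = 0])
    show "\<forall>t\<in>N. \<forall>i<n. \<bar>t i\<bar> \<le> \<bar>M\<bar> \<and> \<bar>max (t i) 0\<bar> \<le> \<bar>M\<bar>"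
      using N(2) unfolding coords_bounded_def by force
    fix i and A :: "(nat \<Rightarrow> real) \<Rightarrow> real" and K :: real
    assume "i < n" "\<forall>t\<in>N. \<bar>A t\<bar> \<le> K"
    with N \<open>\<mu> \<ge> 0\<close> show "exp (\<mu> * Sup ((\<lambda>t. A t + max (t i) 0) ` N)) + exp (\<mu> * Sup ((\<lambda>t. A t - max (t i) 0) ` N))
       \<le> exp (\<mu> * Sup ((\<lambda>t. A t + t i) ` N)) + exp (\<mu> * Sup ((\<lambda>t. A t - t i) ` N))"
      by (intro two_point_relu[where M = M]) (auto simp: coords_bounded_def)
  qed simp
  then show ?thesis
    by (simp add: exp_rademacher_def image_image relu_def)
qed

text \<open>Given inputs \<open>X 0, \<dots>, X (n - 1)\<close>, an element of \<open>layer_outputs m c X j\<close> is the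
  vector \<open>(\<lambda>i. \<nu> (X i))\<close> of values on the sample of a neuron \<open>\<nu>\<close> of depth \<open>j\<close>.\<close>

fun layer_outputs :: "nat \<Rightarrow> real \<Rightarrow> (nat \<Rightarrow> nat \<Rightarrow> real) \<Rightarrow> nat \<Rightarrow> (nat \<Rightarrow> real) set" where
  "layer_outputs m c X 0 = (\<lambda>l i. X i l) ` {..<m}"
| "layer_outputs m c X (Suc j) = relu ` l1_affine c (layer_outputs m c X j)"

lemma layer_outputs_nonempty: "m \<ge> 1 \<Longrightarrow> c \<ge> 0 \<Longrightarrow> layer_outputs m c X j \<noteq> {}"
  by (induction j) (use zero_in_l1_affine in \<open>auto simp: lessThan_empty_iff\<close>)

lemma coords_bounded_layer_outputs:
  assumes X: "\<forall>i<n. \<forall>l<m. \<bar>X i l\<bar> \<le> 1" and "c \<ge> 0"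
  shows "coords_bounded n (layer_outputs m c X j) (max 1 c ^ j)"
proof (induction j)
  case 0
  then show ?case
    using X unfolding coords_bounded_def by auto
next
  case (Suc j)
  have "coords_bounded n (l1_affine c (layer_outputs m c X j)) (c * max 1 (max 1 c ^ j))"
    using coords_bounded_l1_affine[OF Suc.IH \<open>c \<ge> 0\<close>] .
  moreover have "c * max 1 (max 1 c ^ j) \<le> max 1 c ^ Suc j"
    using \<open>c \<ge> 0\<close> by (simp add: mult_right_mono)
  ultimately have "coords_bounded n (l1_affine c (layer_outputs m c X j)) (max 1 c ^ Suc j)"
    unfolding coords_bounded_def by (meson order_trans)
  then show ?case
    by (simp add: coords_bounded_relu)
qed

lemma exp_rademacher_layer_0_le:
  assumes X: "\<forall>i<n. \<forall>l<m. \<bar>X i l\<bar> \<le> 1" and "m \<ge> 1" "\<mu> \<ge> 0"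
  shows "exp_rademacher n (layer_outputs m c X 0) \<mu> \<le> real m * exp (real n * \<mu>\<^sup>2 / 2)"
proof -
  have "exp_rademacher n (layer_outputs m c X 0) \<mu> \<le> sign_avg n (\<lambda>e. \<Sum>l<m. exp (\<Sum>i<n. e i * (\<mu> * X i l)))"
    unfolding exp_rademacher_def
  proof (rule sign_avg_mono)
    fix e :: "nat \<Rightarrow> real"
    have "finite ((\<lambda>g. \<Sum>i<n. e i * g i) ` layer_outputs m c X 0)"
      "(\<lambda>g. \<Sum>i<n. e i * g i) ` layer_outputs m c X 0 \<noteq> {}"
      using \<open>m \<ge> 1\<close> by (auto simp: lessThan_empty_iff)
    from Max_in[OF this] cSup_eq_Max[OF this] obtain l where
      "l < m" "Sup ((\<lambda>g. \<Sum>i<n. e i * g i) ` layer_outputs m c X 0) = (\<Sum>i<n. e i * X i l)"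
      by auto
    then show "exp (\<mu> * Sup ((\<lambda>g. \<Sum>i<n. e i * g i) ` layer_outputs m c X 0))
        \<le> (\<Sum>l<m. exp (\<Sum>i<n. e i * (\<mu> * X i l)))"
      using member_le_sum[of l "{..<m}" "\<lambda>l. exp (\<Sum>i<n. e i * (\<mu> * X i l))"]
      by (simp add: sum_distrib_left mult_ac)
  qed
  also have "\<dots> = (\<Sum>l<m. sign_avg n (\<lambda>e. exp (\<Sum>i<n. e i * (\<mu> * X i l))))"
    by (rule sign_avg_sum)
  also have "\<dots> \<le> (\<Sum>l<m. exp (real n * \<mu>\<^sup>2 / 2))"
  proof (rule sum_mono)
    fix l assume "l \<in> {..<m}"
    then have "(\<mu> * X i l)\<^sup>2 \<le> \<mu>\<^sup>2" if "i < n" for i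
      using X that by (simp add: power_mult_distrib abs_square_le_1 mult_left_le)
    then have "(\<Sum>i<n. (\<mu> * X i l)\<^sup>2) \<le> real n * \<mu>\<^sup>2"
      using sum_mono[of "{..<n}" "\<lambda>i. (\<mu> * X i l)\<^sup>2" "\<lambda>_. \<mu>\<^sup>2"] by simp
    then show "sign_avg n (\<lambda>e. exp (\<Sum>i<n. e i * (\<mu> * X i l))) \<le> exp (real n * \<mu>\<^sup>2 / 2)"
      using sign_avg_exp_sum_le[of n "\<lambda>i. \<mu> * X i l"] by (smt (verit) exp_le_cancel_iff divide_right_mono)
  qed
  finally show ?thesis by simp
qed

lemma exp_square_mono: "0 \<le> a \<Longrightarrow> a \<le> b \<Longrightarrow> exp (real n * a\<^sup>2 / 2) \<le> exp (real n * b\<^sup>2 / 2)"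
  by (intro exp_mono divide_right_mono mult_left_mono power_mono) auto

lemma exp_rademacher_l1_affine_step:
  assumes N: "N \<noteq> {}" "coords_bounded n N M" and "c \<ge> 0" "\<mu> \<ge> 0" "B \<ge> 1"
    and IH: "exp_rademacher n N (\<mu> * c) \<le> L * exp (real n * (\<mu> * c * B)\<^sup>2 / 2)"
  shows "exp_rademacher n (l1_affine c N) \<mu> \<le> 2 * (L + 1) * exp (real n * (\<mu> * c * B)\<^sup>2 / 2)"
proof -
  have "0 \<le> \<mu> * c"
    using assms(3,4) by simp
  then have "exp (real n * (\<mu> * c)\<^sup>2 / 2) \<le> exp (real n * (\<mu> * c * B)\<^sup>2 / 2)"
    using \<open>B \<ge> 1\<close> by (intro exp_square_mono) (auto simp: mult_le_cancel_left1)
  with exp_rademacher_l1_affine_le[OF N assms(4,3)] IH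
  have "exp_rademacher n (l1_affine c N) \<mu>
      \<le> 2 * exp (real n * (\<mu> * c * B)\<^sup>2 / 2) + 2 * (L * exp (real n * (\<mu> * c * B)\<^sup>2 / 2))"
    by linarith
  then show ?thesis
    by (simp add: algebra_simps)
qed

lemma exp_rademacher_layer_outputs_le:
  assumes X: "\<forall>i<n. \<forall>l<m. \<bar>X i l\<bar> \<le> 1" and "m \<ge> 1" "c \<ge> 0" "\<mu> \<ge> 0"
  shows "exp_rademacher n (layer_outputs m c X j) \<mu>
    \<le> 2 ^ j * (real m + real j) * exp (real n * (\<mu> * max 1 c ^ j)\<^sup>2 / 2)"
  using \<open>\<mu> \<ge> 0\<close>
proof (induction j arbitrary: \<mu>)
  case 0
  then show ?case
    using exp_rademacher_layer_0_le[OF X \<open>m \<ge> 1\<close>] by simp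
next
  case (Suc j)
  let ?N = "layer_outputs m c X j" and ?B = "max 1 c ^ j"
  have N: "?N \<noteq> {}" "coords_bounded n ?N ?B"
    using layer_outputs_nonempty coords_bounded_layer_outputs X assms(2,3) by auto
  have "exp_rademacher n (layer_outputs m c X (Suc j)) \<mu> \<le> exp_rademacher n (l1_affine c ?N) \<mu>"
    using exp_rademacher_relu_le[OF _ coords_bounded_l1_affine[OF N(2) \<open>c \<ge> 0\<close>] Suc.prems]
      zero_in_l1_affine[OF \<open>c \<ge> 0\<close>] by auto
  also have "\<dots> \<le> 2 * (2 ^ j * (real m + real j) + 1) * exp (real n * (\<mu> * c * ?B)\<^sup>2 / 2)"
    using Suc.IH[of "\<mu> * c"] Suc.prems \<open>c \<ge> 0\<close>
    by (intro exp_rademacher_l1_affine_step[OF N]) (auto simp: mult.assoc)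
  also have "\<dots> \<le> 2 ^ Suc j * (real m + real (Suc j)) * exp (real n * (\<mu> * max 1 c ^ Suc j)\<^sup>2 / 2)"
  proof (rule mult_mono)
    show "2 * (2 ^ j * (real m + real j) + 1) \<le> 2 ^ Suc j * (real m + real (Suc j))"
      using one_le_power[of "2::real" j] by (simp add: algebra_simps)
    have "\<mu> * c * ?B \<le> \<mu> * max 1 c ^ Suc j"
      using Suc.prems by (simp add: mult_left_mono mult_right_mono mult.assoc)
    then show "exp (real n * (\<mu> * c * ?B)\<^sup>2 / 2) \<le> exp (real n * (\<mu> * max 1 c ^ Suc j)\<^sup>2 / 2)"
      using Suc.prems \<open>c \<ge> 0\<close> by (intro exp_square_mono) auto
  qed auto
  finally show ?case .
qed

lemma exp_rademacher_output_le:
  assumes X: "\<forall>i<n. \<forall>l<m. \<bar>X i l\<bar> \<le> 1" and "m \<ge> 1" "c \<ge> 0" "\<mu> \<ge> 0" "co \<ge> 0"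
    and a0: "max 1 c ^ k \<le> a0"
  shows "exp_rademacher n (l1_affine co (layer_outputs m c X k)) \<mu>
    \<le> 2 ^ Suc k * (real m + real (Suc k)) * exp (real n * (\<mu> * co * a0)\<^sup>2 / 2)"
proof -
  let ?N = "layer_outputs m c X k"
  have N: "?N \<noteq> {}" "coords_bounded n ?N (max 1 c ^ k)"
    using layer_outputs_nonempty coords_bounded_layer_outputs X assms(2,3) by auto
  have "\<mu> * co * max 1 c ^ k \<le> \<mu> * co * a0"
    using a0 assms(4,5) by (intro mult_left_mono) auto
  then have "exp (real n * (\<mu> * co * max 1 c ^ k)\<^sup>2 / 2) \<le> exp (real n * (\<mu> * co * a0)\<^sup>2 / 2)"
    using assms(4,5) by (intro exp_square_mono) auto
  then have "exp_rademacher n ?N (\<mu> * co) \<le> 2 ^ k * (real m + real k) * exp (real n * (\<mu> * co * a0)\<^sup>2 / 2)"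
    using exp_rademacher_layer_outputs_le[OF X assms(2,3), of "\<mu> * co" k] assms(4,5)
    by (smt (verit, best) mult_left_mono zero_le_mult_iff zero_le_power of_nat_0_le_iff)
  moreover have "a0 \<ge> 1"
    using a0 one_le_power[of "max 1 c" k] by linarith
  ultimately have "exp_rademacher n (l1_affine co ?N) \<mu>
      \<le> 2 * (2 ^ k * (real m + real k) + 1) * exp (real n * (\<mu> * co * a0)\<^sup>2 / 2)"
    using assms by (intro exp_rademacher_l1_affine_step[OF N]) auto
  also have "\<dots> \<le> 2 ^ Suc k * (real m + real (Suc k)) * exp (real n * (\<mu> * co * a0)\<^sup>2 / 2)"
    using one_le_power[of "2::real" k] by (intro mult_right_mono) (auto simp: algebra_simps)
  finally show ?thesis .
qed

text \<open>Jensen's inequality followed by the choice \<open>\<mu> = 2 \<surd>K / (B \<surd>n)\<close> of the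
  free parameter.\<close>

lemma sign_avg_Sup_le_of_exp_rademacher:
  assumes exp_bound: "\<And>\<mu>. \<mu> \<ge> 0 \<Longrightarrow> exp_rademacher n N \<mu> \<le> L * exp (real n * (\<mu> * B)\<^sup>2 / 2)"
    and "B > 0" "n \<ge> 1" "K > 0" "L > 0" "ln L \<le> 2 * K"
  shows "sign_avg n (\<lambda>e. Sup ((\<lambda>g. \<Sum>i<n. e i * g i) ` N)) \<le> 2 * B * sqrt (real n) * sqrt K"
proof -
  define R where "R = sign_avg n (\<lambda>e. Sup ((\<lambda>g. \<Sum>i<n. e i * g i) ` N))"
  define \<mu> where "\<mu> = 2 * sqrt K / (B * sqrt (real n))"
  have "sqrt (real n) > 0" "sqrt K > 0"
    using assms by auto
  then have "\<mu> > 0"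
    unfolding \<mu>_def using \<open>B > 0\<close> by simp
  have "exp (\<mu> * R) \<le> exp_rademacher n N \<mu>"
    unfolding R_def exp_rademacher_def sign_avg_cmult[symmetric] by (rule exp_sign_avg_le)
  also have "\<dots> \<le> L * exp (real n * (\<mu> * B)\<^sup>2 / 2)"
    using exp_bound \<open>\<mu> > 0\<close> by simp
  finally have "\<mu> * R \<le> ln (L * exp (real n * (\<mu> * B)\<^sup>2 / 2))"
    using \<open>L > 0\<close> by (simp add: ln_ge_iff)
  then have "\<mu> * R \<le> ln L + real n * (\<mu> * B)\<^sup>2 / 2"
    using \<open>L > 0\<close> by (simp add: ln_mult)
  then have "R \<le> 2 * K / \<mu> + real n * \<mu> * B\<^sup>2 / 2"
    using \<open>\<mu> > 0\<close> \<open>ln L \<le> 2 * K\<close> by (simp add: field_simps power2_eq_square)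
  moreover have "K = sqrt K * sqrt K" "real n = sqrt (real n) * sqrt (real n)"
    using \<open>K > 0\<close> by simp_all
  then have "2 * K / \<mu> = B * sqrt (real n) * sqrt K" "real n * \<mu> * B\<^sup>2 / 2 = B * sqrt (real n) * sqrt K"
    unfolding \<mu>_def using \<open>sqrt K > 0\<close> \<open>sqrt (real n) > 0\<close> \<open>B > 0\<close>
    by (simp_all add: field_simps power2_eq_square)
  ultimately show ?thesis
    unfolding R_def by (simp add: mult_ac)
qed

lemma ln_two_power_le:
  fixes k m :: nat
  shows "ln (2 ^ Suc k * (real m + real (Suc k))) \<le> 2 * (real k + 2 + ln (real m + 1))"
proof -
  have "ln (2 ^ Suc k * (real m + real (Suc k))) = real (Suc k) * ln 2 + ln (real m + real (Suc k))"
    using ln_mult[of "2 ^ Suc k" "real m + real (Suc k)"] ln_realpow[of 2 "Suc k"] by simp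
  moreover have "ln (real m + real (Suc k)) \<le> ln ((real m + 1) * (real k + 1))"
    by (subst ln_le_cancel_iff) (auto simp: algebra_simps add_pos_nonneg)
  moreover have "ln ((real m + 1) * (real k + 1)) = ln (real m + 1) + ln (real k + 1)"
    by (simp add: ln_mult)
  moreover have "real (Suc k) * ln 2 \<le> real (Suc k)"
    using ln_le_minus_one[of 2] by (intro mult_left_le) auto
  moreover have "ln (real k + 1) \<le> real k" "ln (real m + 1) \<ge> 0"
    using ln_le_minus_one[of "real k + 1"] by auto
  ultimately show ?thesis
    by (smt (verit) of_nat_Suc)
qed

section \<open>Networks\<close>

lemma column_sum_le_pq_norm:
  assumes "1 \<le> q" "j < b"
  shows "(\<Sum>i\<le>a. \<bar>V i j\<bar>) \<le> pq_norm 1 q a b V"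
proof -
  define col where "col j = (\<Sum>i\<le>a. \<bar>V i j\<bar>)" for j
  have pq: "pq_norm 1 q a b V = (if q = \<infinity> then Max (col ` {..<b})
      else (\<Sum>j<b. col j powr real_of_ereal q) powr (1 / real_of_ereal q))"
    by (simp add: pq_norm_def col_def)
  show ?thesis
  proof (cases q)
    case PInf
    have "col j \<le> Max (col ` {..<b})"
      using \<open>j < b\<close> by (intro Max_ge) auto
    then show ?thesis
      unfolding pq using PInf by (simp add: col_def)
  next
    case MInf
    then show ?thesis using \<open>1 \<le> q\<close> by simp
  next
    case (real r)
    then have "r \<ge> 1" using \<open>1 \<le> q\<close> by simp
    have "col j = (col j powr r) powr (1 / r)"
      using \<open>r \<ge> 1\<close> by (simp add: powr_powr col_def sum_nonneg)
    also have "\<dots> \<le> (\<Sum>j<b. col j powr r) powr (1 / r)"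
      using \<open>r \<ge> 1\<close> \<open>j < b\<close> member_le_sum[of j "{..<b}" "\<lambda>j. col j powr r"]
      by (intro powr_mono2) auto
    finally show ?thesis
      unfolding pq using real by (simp add: col_def)
  qed
qed

lemma relu_affine_in_layer_outputs:
  assumes "(\<Sum>t\<le>a. \<bar>V t l\<bar>) \<le> c" "\<forall>t<a. (\<lambda>i. Xs i t) \<in> layer_outputs m c X j"
  shows "(\<lambda>i. relu (affine_apply V a (Xs i)) l) \<in> layer_outputs m c X (Suc j)"
proof -
  have "(\<lambda>i. V 0 l + (\<Sum>t<a. V (Suc t) l * Xs i t)) \<in> l1_affine c (layer_outputs m c X j)"
    unfolding l1_affine_def
    by (rule CollectI, rule exI[of _ a], rule exI[of _ "\<lambda>t. V t l"], rule exI[of _ "\<lambda>t i. Xs i t"])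
      (use assms in auto)
  then have "relu (\<lambda>i. V 0 l + (\<Sum>t<a. V (Suc t) l * Xs i t)) \<in> layer_outputs m c X (Suc j)"
    by simp
  then show ?thesis
    by (simp add: relu_def affine_apply_def)
qed

lemma hidden_in_layer_outputs:
  assumes "length Vs < length ds"
    and "\<forall>r<length Vs. \<forall>l<ds ! Suc r. (\<Sum>t\<le>ds ! r. \<bar>(Vs ! r) t l\<bar>) \<le> c"
    and "\<forall>l<ds ! 0. (\<lambda>i. Xs i l) \<in> layer_outputs m c X j"
  shows "\<forall>l<ds ! length Vs. (\<lambda>i. hidden ds Vs (Xs i) l) \<in> layer_outputs m c X (j + length Vs)"
  using assms
proof (induction Vs arbitrary: ds Xs j)
  case Nil
  then show ?case by (cases ds) auto
next
  case (Cons V Vs)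
  then obtain a ds' where ds: "ds = a # ds'"
    by (cases ds) auto
  have "\<forall>l<ds' ! length Vs. (\<lambda>i. hidden ds' Vs (relu (affine_apply V a (Xs i))) l)
      \<in> layer_outputs m c X (Suc j + length Vs)"
  proof (rule Cons.IH)
    show "\<forall>l<ds' ! 0. (\<lambda>i. relu (affine_apply V a (Xs i)) l) \<in> layer_outputs m c X (Suc j)"
    proof (intro allI impI relu_affine_in_layer_outputs)
      fix l assume "l < ds' ! 0"
      then show "(\<Sum>t\<le>a. \<bar>V t l\<bar>) \<le> c"
        using Cons.prems(2)[rule_format, of 0 l] ds by simp
      show "(\<lambda>i. Xs i t) \<in> layer_outputs m c X j" if "t < a" for t
        using Cons.prems(3) ds that by simp
    qed
  qed (use Cons.prems ds in fastforce)+
  then show ?case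
    by (simp add: ds)
qed

lemma relu_net_output_in_l1_affine:
  assumes F: "F \<in> relu_nets k (m # dh @ [1]) 1 q c co" and "1 \<le> q" "length dh = k"
  shows "(\<lambda>i. F (X i) 0) \<in> l1_affine co (layer_outputs m c X k)"
proof -
  define ds where "ds = m # dh @ [1]"
  obtain Vs where Vs: "length Vs = k + 1" "\<forall>i<k. pq_norm 1 q (ds ! i) (ds ! Suc i) (Vs ! i) = c"
     "pq_norm 1 q (ds ! k) (ds ! Suc k) (Vs ! k) \<le> co"
     "F = (\<lambda>x. affine_apply (Vs ! k) (ds ! k) (hidden ds (take k Vs) x))"
    using F unfolding relu_nets_def ds_def by auto
  have ds: "length ds = k + 2" "ds ! 0 = m" "ds ! Suc k = 1"
    unfolding ds_def using \<open>length dh = k\<close> by (auto simp: nth_append)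
  have "\<forall>l<ds ! length (take k Vs). (\<lambda>i. hidden ds (take k Vs) (X i) l) \<in> layer_outputs m c X (0 + length (take k Vs))"
  proof (rule hidden_in_layer_outputs)
    show "\<forall>r<length (take k Vs). \<forall>l<ds ! Suc r. (\<Sum>t\<le>ds ! r. \<bar>(take k Vs ! r) t l\<bar>) \<le> c"
      using column_sum_le_pq_norm[OF \<open>1 \<le> q\<close>] Vs(1,2) by fastforce
  qed (use Vs(1) ds in auto)
  then have hidden: "\<forall>l<ds ! k. (\<lambda>i. hidden ds (take k Vs) (X i) l) \<in> layer_outputs m c X k"
    using Vs(1) by simp
  have "(\<Sum>t\<le>ds ! k. \<bar>(Vs ! k) t 0\<bar>) \<le> co"
    using column_sum_le_pq_norm[OF \<open>1 \<le> q\<close>, where j = 0 and b = "ds ! Suc k" and a = "ds ! k" and V = "Vs ! k"] Vs(3) ds by simp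
  with hidden have "(\<lambda>i. (Vs ! k) 0 0 + (\<Sum>t<ds ! k. (Vs ! k) (Suc t) 0 * hidden ds (take k Vs) (X i) t))
      \<in> l1_affine co (layer_outputs m c X k)"
    unfolding l1_affine_def
    by (intro CollectI exI[of _ "ds ! k"] exI[of _ "\<lambda>t. (Vs ! k) t 0"]
        exI[of _ "\<lambda>t i. hidden ds (take k Vs) (X i) t"]) auto
  then show ?thesis
    unfolding Vs(4) affine_apply_def .
qed

lemma sign_avg_Sup_relu_net_class_le:
  assumes X: "\<forall>i<n. \<forall>l<m. \<bar>X i l\<bar> \<le> 1" and "m \<ge> 1" "c \<ge> 0" "co > 0" "n \<ge> 1"
    and a0: "a0 \<ge> 1" "c ^ k \<le> a0"
  shows "sign_avg n (\<lambda>e. Sup ((\<lambda>g. \<Sum>i<n. e i * g i) ` l1_affine co (layer_outputs m c X k)))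
    \<le> 2 * (co * a0) * sqrt (real n) * sqrt (real k + 2 + ln (real m + 1))"
proof (rule sign_avg_Sup_le_of_exp_rademacher)
  have "max 1 c ^ k \<le> a0"
    using a0 \<open>c \<ge> 0\<close> by (cases "c \<le> 1") (auto simp: max_def)
  then show "exp_rademacher n (l1_affine co (layer_outputs m c X k)) \<mu>
      \<le> 2 ^ Suc k * (real m + real (Suc k)) * exp (real n * (\<mu> * (co * a0))\<^sup>2 / 2)" if "\<mu> \<ge> 0" for \<mu>
    using exp_rademacher_output_le[OF X \<open>m \<ge> 1\<close> \<open>c \<ge> 0\<close> that, of co] \<open>co > 0\<close>
    by (simp add: mult.assoc)
qed (use assms ln_two_power_le in \<open>auto intro: add_pos_nonneg\<close>)

lemma clip_lipschitz: "\<bar>max 0 (min 1 a) - max 0 (min 1 b)\<bar> \<le> \<bar>a - (b::real)\<bar>"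
  by (auto simp: abs_le_iff max_def min_def)

lemma sign_avg_Sup_relu_net_loss_le:
  fixes S :: "nat \<Rightarrow> (nat \<Rightarrow> real) \<times> real"
  assumes S: "\<forall>i<n. S i \<in> cube m \<times> Y"
    and d_lip: "\<And>y u u'. y \<in> Y \<Longrightarrow> \<bar>d y u - d y u'\<bar> \<le> \<bar>u - u'\<bar>"
    and C: "C \<subseteq> relu_nets k (m # dh @ [1]) 1 q c co" "C \<noteq> {}"
    and m: "m \<ge> 1" and c: "c \<ge> 0" and co: "co > 0" and "n \<ge> 1" "a0 \<ge> 1" "c ^ k \<le> a0"
    and q: "1 \<le> q" and dh: "length dh = k"
  shows "sign_avg n (\<lambda>e. Sup ((\<lambda>F. \<Sum>i<n. e i * max 0 (min 1 (d (snd (S i)) (F (fst (S i)) 0)))) ` C))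
     \<le> 2 * (co * a0) * sqrt (real n) * sqrt (real k + 2 + ln (real m + 1))"
proof -
  define X where "X i = fst (S i)" for i
  define N where "N = l1_affine co (layer_outputs m c X k)"
  define T where "T = (\<lambda>F i. F (X i) 0) ` C"
  define M where "M = co * max 1 (max 1 c ^ k)"
  have X: "\<forall>i<n. \<forall>l<m. \<bar>X i l\<bar> \<le> 1"
    using S unfolding X_def cube_def by auto
  have "T \<subseteq> N"
    unfolding T_def N_def using relu_net_output_in_l1_affine C q dh by blast
  have N_bounded: "coords_bounded n N M"
    unfolding N_def M_def using c co
    by (intro coords_bounded_l1_affine coords_bounded_layer_outputs[OF X]) auto
  have "sign_avg n (\<lambda>e. Sup ((\<lambda>t. \<Sum>i<n. e i * max 0 (min 1 (d (snd (S i)) (t i)))) ` T))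
      \<le> sign_avg n (\<lambda>e. Sup ((\<lambda>t. \<Sum>i<n. e i * t i) ` T))"
  proof (rule sign_avg_Sup_lipschitz_le[where M = "max 1 M"])
    show "\<forall>t\<in>T. \<forall>i<n. \<bar>t i\<bar> \<le> max 1 M"
      using N_bounded \<open>T \<subseteq> N\<close> unfolding coords_bounded_def by fastforce
    have "snd (S i) \<in> Y" if "i < n" for i
      using S that by (auto simp: mem_Times_iff)
    then show "\<forall>i<n. \<forall>u v. \<bar>max 0 (min 1 (d (snd (S i)) u)) - max 0 (min 1 (d (snd (S i)) v))\<bar> \<le> \<bar>u - v\<bar>"
      using clip_lipschitz d_lip order_trans by blast
  qed (use C T_def in auto)
  also have "\<dots> \<le> sign_avg n (\<lambda>e. Sup ((\<lambda>g. \<Sum>i<n. e i * g i) ` N))"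
    using \<open>T \<subseteq> N\<close> C bdd_above_sign_sum[OF N_bounded] unfolding T_def
    by (intro sign_avg_mono cSup_subset_mono image_mono) auto
  also have "\<dots> \<le> 2 * (co * a0) * sqrt (real n) * sqrt (real k + 2 + ln (real m + 1))"
    unfolding N_def using assms by (intro sign_avg_Sup_relu_net_class_le[OF X]) auto
  finally show ?thesis
    by (simp add: T_def X_def image_image)
qed

lemma continuous_on_hidden:
  fixes Ls :: "('p::topological_space \<Rightarrow> layer) list"
  assumes "\<forall>L\<in>set Ls. \<forall>i j. continuous_on UNIV (\<lambda>p. L p i j)" "\<forall>j. continuous_on UNIV (\<lambda>p. X p j)"
  shows "continuous_on UNIV (\<lambda>p. hidden ds (map (\<lambda>L. L p) Ls) (X p) j)"
  using assms
proof (induction Ls arbitrary: ds X j)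
  case Nil
  then show ?case by (cases ds) auto
next
  case (Cons L Ls)
  show ?case
  proof (cases ds)
    case Nil
    then show ?thesis using Cons.prems by simp
  next
    case (Cons a ds')
    have "continuous_on UNIV (\<lambda>p. relu (affine_apply (L p) a (X p)) j)" for j
      using Cons.prems unfolding relu_def affine_apply_def by (intro continuous_intros) auto
    then show ?thesis
      using Cons.IH[of "\<lambda>p. relu (affine_apply (L p) a (X p))" ds'] Cons.prems \<open>ds = a # ds'\<close> by simp
  qed
qed

text \<open>Indexing the layers by \<open>nat\<close> rather than by a list makes the parameter space
  the metrisable space \<open>nat \<Rightarrow> layer\<close>.\<close>

definition net :: "nat list \<Rightarrow> nat \<Rightarrow> (nat \<Rightarrow> layer) \<Rightarrow> (nat \<Rightarrow> real) \<Rightarrow> (nat \<Rightarrow> real)" where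
  "net ds k \<theta> x = affine_apply (\<theta> k) (ds ! k) (hidden ds (map \<theta> [0..<k]) x)"

lemma continuous_on_layer_coordinate: "continuous_on UNIV (\<lambda>\<theta>::nat \<Rightarrow> layer. \<theta> l i j)"
proof -
  have "continuous_on UNIV (\<lambda>\<theta>::nat \<Rightarrow> layer. \<theta> l)"
    by (rule continuous_on_product_coordinates)
  then have "continuous_on UNIV (\<lambda>\<theta>::nat \<Rightarrow> layer. \<theta> l i)"
    by (rule continuous_on_product_then_coordinatewise)
  then show ?thesis
    by (rule continuous_on_product_then_coordinatewise)
qed

lemma continuous_on_net_param: "continuous_on UNIV (\<lambda>\<theta>. net ds k \<theta> x 0)"
proof -
  have "continuous_on UNIV (\<lambda>\<theta>. hidden ds (map (\<lambda>L. L \<theta>) (map (\<lambda>l \<theta>. \<theta> l) [0..<k])) x j)" for j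
    using continuous_on_layer_coordinate by (intro continuous_on_hidden) auto
  then have "continuous_on UNIV (\<lambda>\<theta>. hidden ds (map \<theta> [0..<k]) x j)" for j
    by (simp add: comp_def)
  then show ?thesis
    unfolding net_def affine_apply_def
    by (intro continuous_on_add continuous_on_sum continuous_on_mult continuous_on_layer_coordinate)
qed

lemma continuous_on_net_input: "continuous_on UNIV (\<lambda>x. net ds k \<theta> x 0)"
proof -
  have "continuous_on UNIV (\<lambda>x. hidden ds (map (\<lambda>L. L x) (map (\<lambda>l (x::nat \<Rightarrow> real). \<theta> l) [0..<k])) x j)" for j
    by (intro continuous_on_hidden) (auto intro: continuous_on_product_coordinates)
  then have "continuous_on UNIV (\<lambda>x. hidden ds (map \<theta> [0..<k]) x j)" for j
    by (simp add: comp_def)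
  then show ?thesis
    unfolding net_def affine_apply_def
    by (intro continuous_on_add continuous_on_sum continuous_on_mult continuous_on_const)
qed

lemma relu_nets_eq_image_net:
  assumes "length ds = k + 2"
  shows "relu_nets k ds 1 q c co = net ds k ` {\<theta>. (\<forall>i<k. pq_norm 1 q (ds ! i) (ds ! Suc i) (\<theta> i) = c) \<and>
           pq_norm 1 q (ds ! k) (ds ! Suc k) (\<theta> k) \<le> co}"
proof (intro equalityI subsetI)
  fix F assume "F \<in> relu_nets k ds 1 q c co"
  then obtain Vs where Vs: "length Vs = k + 1" "\<forall>i<k. pq_norm 1 q (ds ! i) (ds ! Suc i) (Vs ! i) = c"
     "pq_norm 1 q (ds ! k) (ds ! Suc k) (Vs ! k) \<le> co"
     "F = (\<lambda>x. affine_apply (Vs ! k) (ds ! k) (hidden ds (take k Vs) x))"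
    unfolding relu_nets_def by auto
  have "take k Vs = map (\<lambda>i. Vs ! i) [0..<k]"
    using Vs(1) by (intro nth_equalityI) auto
  then have "F = net ds k (\<lambda>i. Vs ! i)"
    unfolding net_def Vs(4) by simp
  with Vs show "F \<in> net ds k ` {\<theta>. (\<forall>i<k. pq_norm 1 q (ds ! i) (ds ! Suc i) (\<theta> i) = c) \<and>
           pq_norm 1 q (ds ! k) (ds ! Suc k) (\<theta> k) \<le> co}"
    by blast
next
  fix F assume "F \<in> net ds k ` {\<theta>. (\<forall>i<k. pq_norm 1 q (ds ! i) (ds ! Suc i) (\<theta> i) = c) \<and>
           pq_norm 1 q (ds ! k) (ds ! Suc k) (\<theta> k) \<le> co}"
  then obtain \<theta> where \<theta>: "\<forall>i<k. pq_norm 1 q (ds ! i) (ds ! Suc i) (\<theta> i) = c"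
      "pq_norm 1 q (ds ! k) (ds ! Suc k) (\<theta> k) \<le> co" and F: "F = net ds k \<theta>"
    by auto
  have "take k (map \<theta> [0..<Suc k]) = map \<theta> [0..<k]"
    by (simp add: take_map)
  then show "F \<in> relu_nets k ds 1 q c co"
    unfolding relu_nets_def using assms \<theta>
    by (intro CollectI exI[of _ "map \<theta> [0..<Suc k]"]) (auto simp: F net_def nth_append)
qed

section \<open>McDiarmid's inequality\<close>

definition bounded_differences :: "'a measure \<Rightarrow> nat \<Rightarrow> real \<Rightarrow> ((nat \<Rightarrow> 'a) \<Rightarrow> real) \<Rightarrow> bool" where
  "bounded_differences M m \<delta> g \<longleftrightarrow>
     (\<forall>x\<in>space (PiM {..<m} (\<lambda>_. M)). \<forall>i<m. \<forall>y\<in>space M. \<bar>g x - g (x(i := y))\<bar> \<le> \<delta>)"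

context prob_space
begin

lemma integrable_bounded:
  "f \<in> borel_measurable M \<Longrightarrow> (\<And>x. x \<in> space M \<Longrightarrow> \<bar>f x\<bar> \<le> (B::real)) \<Longrightarrow> integrable M f"
  by (rule integrable_const_bound[where B = B]) (auto intro: AE_I2)

lemma abs_integral_le_const:
  assumes "\<And>x. x \<in> space M \<Longrightarrow> \<bar>f x\<bar> \<le> (B::real)"
  shows "\<bar>\<integral>x. f x \<partial>M\<bar> \<le> B"
proof (cases "integrable M f")
  case True
  then have "(\<integral>x. \<bar>f x\<bar> \<partial>M) \<le> B"
    using assms by (intro integral_le_const) (auto intro: AE_I2)
  then show ?thesis
    using integral_abs_bound[of M f] by linarith
next
  case False
  obtain x where "x \<in> space M"
    using not_empty by blast
  with assms show ?thesis
    using False by (simp add: not_integrable_integral_eq) (meson abs_ge_zero order_trans)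
qed

lemma integrable_exp_bounded:
  fixes f :: "'a \<Rightarrow> real"
  assumes "f \<in> borel_measurable M" and bounded: "\<And>x. x \<in> space M \<Longrightarrow> \<bar>f x\<bar> \<le> B"
  shows "integrable M (\<lambda>x. exp (l * (f x - c)))"
proof (rule integrable_bounded[where B = "exp (\<bar>l\<bar> * (B + \<bar>c\<bar>))"])
  fix x assume "x \<in> space M"
  then have "\<bar>f x - c\<bar> \<le> B + \<bar>c\<bar>"
    using abs_triangle_ineq4[of "f x" c] bounded by fastforce
  then have "l * (f x - c) \<le> \<bar>l\<bar> * (B + \<bar>c\<bar>)"
    by (metis abs_ge_self abs_mult abs_ge_zero mult_left_mono order_trans)
  then show "\<bar>exp (l * (f x - c))\<bar> \<le> exp (\<bar>l\<bar> * (B + \<bar>c\<bar>))"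
    by simp
qed (use assms in simp)

lemma hoeffdings_lemma_oscillation:
  fixes f :: "'a \<Rightarrow> real"
  assumes [measurable]: "f \<in> borel_measurable M" and bounded: "\<And>y. y \<in> space M \<Longrightarrow> \<bar>f y\<bar> \<le> B"
    and osc: "\<And>y y'. y \<in> space M \<Longrightarrow> y' \<in> space M \<Longrightarrow> f y - f y' \<le> \<delta>" and "l > 0"
  shows "(\<integral>y. exp (l * (f y - (\<integral>y. f y \<partial>M))) \<partial>M) \<le> exp (l\<^sup>2 * \<delta>\<^sup>2 / 8)"
proof -
  define a where "a = (INF y\<in>space M. f y)"
  define b where "b = (SUP y\<in>space M. f y)"
  have bdd: "bdd_below (f ` space M)" "bdd_above (f ` space M)"
    using bounded by (force intro: bdd_belowI[of _ "-B"] bdd_aboveI[of _ B] simp: abs_le_iff)+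
  have ab: "a \<le> f y" "f y \<le> b" if "y \<in> space M" for y
    unfolding a_def b_def using that bdd by (auto intro: cINF_lower cSUP_upper)
  have "b \<le> f y' + \<delta>" if "y' \<in> space M" for y'
    unfolding b_def using osc that by (intro cSUP_least) (use not_empty in \<open>auto simp: algebra_simps\<close>)
  then have "b - \<delta> \<le> a"
    unfolding a_def by (intro cINF_greatest) (use not_empty in \<open>auto simp: algebra_simps\<close>)
  moreover have "a \<le> b"
    using ab not_empty by fastforce
  ultimately have "(b - a)\<^sup>2 \<le> \<delta>\<^sup>2"
    by (intro power_mono) auto
  interpret interval_bounded_random_variable M f a b
    by unfold_locales (auto intro!: AE_I2 ab)
  have "(\<integral>y. exp (l * (f y - (\<integral>y. f y \<partial>M))) \<partial>M) \<le> exp (l\<^sup>2 * (b - a)\<^sup>2 / 8)"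
  proof -
    have "integrable M (\<lambda>y. exp (l * (f y - (\<integral>y. f y \<partial>M))))"
      using assms(1) bounded by (rule integrable_exp_bounded)
    then have "ennreal (\<integral>y. exp (l * (f y - (\<integral>y. f y \<partial>M))) \<partial>M)
        = (\<integral>\<^sup>+ y. ennreal (exp (l * (f y - (\<integral>y. f y \<partial>M)))) \<partial>M)"
      by (intro nn_integral_eq_integral[symmetric]) auto
    also have "\<dots> \<le> ennreal (exp (l\<^sup>2 * (b - a)\<^sup>2 / 8))"
      using Hoeffdings_lemma_nn_integral[OF \<open>l > 0\<close>] by simp
    finally show ?thesis
      by (simp add: ennreal_le_iff)
  qed
  also have "\<dots> \<le> exp (l\<^sup>2 * \<delta>\<^sup>2 / 8)"
    using \<open>(b - a)\<^sup>2 \<le> \<delta>\<^sup>2\<close> by (intro exp_mono divide_right_mono mult_left_mono) auto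
  finally show ?thesis .
qed

lemma prob_space_PiM_power: "prob_space (PiM I (\<lambda>_. M))"
  by (intro prob_space_PiM prob_space_axioms)

lemma fun_upd_in_space_PiM_Suc:
  "x \<in> space (PiM {..<m} (\<lambda>_. M)) \<Longrightarrow> y \<in> space M \<Longrightarrow> x(m := y) \<in> space (PiM {..<Suc m} (\<lambda>_. M))"
  by (auto simp: space_PiM PiE_iff extensional_def)

lemma measurable_fun_upd_last:
  assumes "g \<in> borel_measurable (PiM {..<Suc m} (\<lambda>_. M))"
  shows "(\<lambda>(x, y). g (x(m := y))) \<in> borel_measurable (PiM {..<m} (\<lambda>_. M) \<Otimes>\<^sub>M M)"
    and "x \<in> space (PiM {..<m} (\<lambda>_. M)) \<Longrightarrow> (\<lambda>y. g (x(m := y))) \<in> borel_measurable M"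
proof -
  have "PiM {..<Suc m} (\<lambda>_. M) = PiM (insert m {..<m}) (\<lambda>_. M)"
    by (simp add: lessThan_Suc)
  with assms have g: "g \<in> borel_measurable (PiM (insert m {..<m}) (\<lambda>_. M))"
    by simp
  show "(\<lambda>(x, y). g (x(m := y))) \<in> borel_measurable (PiM {..<m} (\<lambda>_. M) \<Otimes>\<^sub>M M)"
    using measurable_comp[OF measurable_add_dim g] by (simp add: comp_def case_prod_beta)
  show "(\<lambda>y. g (x(m := y))) \<in> borel_measurable M" if "x \<in> space (PiM {..<m} (\<lambda>_. M))"
    using measurable_comp[OF measurable_component_update[OF that] g] by (simp add: comp_def)
qed

lemma bounded_differences_integral_last:
  assumes g: "g \<in> borel_measurable (PiM {..<Suc m} (\<lambda>_. M))"
    and bounded: "\<And>x. x \<in> space (PiM {..<Suc m} (\<lambda>_. M)) \<Longrightarrow> \<bar>g x\<bar> \<le> B"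
    and diff: "bounded_differences M (Suc m) \<delta> g"
  shows "bounded_differences M m \<delta> (\<lambda>x. \<integral>y. g (x(m := y)) \<partial>M)"
  unfolding bounded_differences_def
proof (intro ballI allI impI)
  fix x i y
  assume x: "x \<in> space (PiM {..<m} (\<lambda>_. M))" and "i < m" and y: "y \<in> space M"
  have x': "x(i := y) \<in> space (PiM {..<m} (\<lambda>_. M))"
    using x y \<open>i < m\<close> by (auto simp: space_PiM PiE_iff extensional_def)
  have swap: "(x(i := y))(m := y') = (x(m := y'))(i := y)" for y'
    using \<open>i < m\<close> by (simp add: fun_upd_twist)
  have int: "integrable M (\<lambda>y'. g (z(m := y')))" if "z \<in> space (PiM {..<m} (\<lambda>_. M))" for z
    using that by (intro integrable_bounded[where B = B] measurable_fun_upd_last(2)[OF g] bounded fun_upd_in_space_PiM_Suc)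
  have "(\<integral>y'. g (x(m := y')) \<partial>M) - (\<integral>y'. g ((x(i := y))(m := y')) \<partial>M)
      = (\<integral>y'. g (x(m := y')) - g ((x(m := y'))(i := y)) \<partial>M)"
    using int[OF x] int[OF x'] by (simp add: swap)
  also have "\<bar>\<dots>\<bar> \<le> \<delta>"
    using diff \<open>i < m\<close> y x by (intro abs_integral_le_const) (auto simp: bounded_differences_def fun_upd_in_space_PiM_Suc)
  finally show "\<bar>(\<integral>y'. g (x(m := y')) \<partial>M) - (\<integral>y'. g ((x(i := y))(m := y')) \<partial>M)\<bar> \<le> \<delta>" .
qed

lemma integral_exp_fun_upd_last_le:
  assumes g: "g \<in> borel_measurable (PiM {..<Suc m} (\<lambda>_. M))"
    and bounded: "\<And>x. x \<in> space (PiM {..<Suc m} (\<lambda>_. M)) \<Longrightarrow> \<bar>g x\<bar> \<le> B"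
    and diff: "bounded_differences M (Suc m) \<delta> g"
    and x: "x \<in> space (PiM {..<m} (\<lambda>_. M))" and "l > 0"
  shows "(\<integral>y. exp (l * (g (x(m := y)) - c)) \<partial>M)
    \<le> exp (l * ((\<integral>y. g (x(m := y)) \<partial>M) - c)) * exp (l\<^sup>2 * \<delta>\<^sup>2 / 8)"
proof -
  define f where "f y = g (x(m := y))" for y
  have f: "f \<in> borel_measurable M" "\<And>y. y \<in> space M \<Longrightarrow> \<bar>f y\<bar> \<le> B"
    unfolding f_def using measurable_fun_upd_last(2)[OF g x] bounded fun_upd_in_space_PiM_Suc[OF x] by auto
  have "f y - f y' \<le> \<delta>" if "y \<in> space M" "y' \<in> space M" for y y'
    using diff fun_upd_in_space_PiM_Suc[OF x that(1)] that(2)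
    unfolding bounded_differences_def f_def by fastforce
  then have "(\<integral>y. exp (l * (f y - (\<integral>y. f y \<partial>M))) \<partial>M) \<le> exp (l\<^sup>2 * \<delta>\<^sup>2 / 8)"
    using hoeffdings_lemma_oscillation[OF f] \<open>l > 0\<close> by blast
  moreover have "exp (l * (f y - c)) = exp (l * ((\<integral>y. f y \<partial>M) - c)) * exp (l * (f y - (\<integral>y. f y \<partial>M)))" for y
    unfolding mult_exp_exp right_diff_distrib by (rule arg_cong[where f = exp]) linarith
  then have "(\<integral>y. exp (l * (f y - c)) \<partial>M)
      = exp (l * ((\<integral>y. f y \<partial>M) - c)) * (\<integral>y. exp (l * (f y - (\<integral>y. f y \<partial>M))) \<partial>M)"
    by simp
  ultimately show ?thesis
    unfolding f_def by (simp add: mult_left_mono)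
qed

text \<open>Integrating out the last coordinate leaves a function of the others with the same
  bounded differences, while Hoeffding's lemma bounds the exponential moment in the last coordinate.\<close>

lemma mcdiarmid_exp_moment_le:
  assumes "g \<in> borel_measurable (PiM {..<m} (\<lambda>_. M))"
    and "\<And>x. x \<in> space (PiM {..<m} (\<lambda>_. M)) \<Longrightarrow> \<bar>g x\<bar> \<le> B"
    and "bounded_differences M m \<delta> g" and "l > 0"
  shows "(\<integral>x. exp (l * (g x - (\<integral>x. g x \<partial>PiM {..<m} (\<lambda>_. M)))) \<partial>PiM {..<m} (\<lambda>_. M))
    \<le> exp (l\<^sup>2 * real m * \<delta>\<^sup>2 / 8)"
  using assms(1-3)
proof (induction m arbitrary: g)
  case 0
  show ?case
    by (simp add: PiM_empty lebesgue_integral_count_space_finite)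
next
  case (Suc m)
  let ?N = "PiM {..<m} (\<lambda>_. M)"
  interpret N: prob_space ?N
    by (rule prob_space_PiM_power)
  interpret product_sigma_finite "\<lambda>_. M"
    by (simp add: product_sigma_finite_def sigma_finite_measure_axioms)
  define h where "h x = (\<integral>y. g (x(m := y)) \<partial>M)" for x
  define Eh where "Eh = (\<integral>x. h x \<partial>?N)"
  have h: "h \<in> borel_measurable ?N" "\<And>x. x \<in> space ?N \<Longrightarrow> \<bar>h x\<bar> \<le> B"
    "bounded_differences M m \<delta> h"
  proof -
    show "h \<in> borel_measurable ?N"
      unfolding h_def by (rule borel_measurable_lebesgue_integral measurable_fun_upd_last(1)[OF Suc.prems(1)])+
    show "\<bar>h x\<bar> \<le> B" if "x \<in> space ?N" for x
      unfolding h_def using Suc.prems(2) fun_upd_in_space_PiM_Suc[OF that] by (intro abs_integral_le_const) blast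
    show "bounded_differences M m \<delta> h"
      unfolding h_def by (rule bounded_differences_integral_last[OF Suc.prems])
  qed
  have PiM_Suc: "PiM {..<Suc m} (\<lambda>_. M) = PiM (insert m {..<m}) (\<lambda>_. M)"
    by (simp add: lessThan_Suc)
  have "(\<integral>x. g x \<partial>PiM {..<Suc m} (\<lambda>_. M)) = Eh"
    unfolding Eh_def h_def PiM_Suc using Suc.prems(1,2) PiM_Suc
    by (intro product_integral_insert) (auto intro: prob_space.integrable_bounded prob_space_PiM_power)
  then have "(\<integral>x. exp (l * (g x - (\<integral>x. g x \<partial>PiM {..<Suc m} (\<lambda>_. M)))) \<partial>PiM {..<Suc m} (\<lambda>_. M))
      = (\<integral>x. exp (l * (g x - Eh)) \<partial>PiM (insert m {..<m}) (\<lambda>_. M))"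
    by (simp only: PiM_Suc)
  also have "\<dots> = (\<integral>x. (\<integral>y. exp (l * (g (x(m := y)) - Eh)) \<partial>M) \<partial>?N)"
    using Suc.prems(1,2) PiM_Suc
    by (intro product_integral_insert) (auto intro: prob_space.integrable_exp_bounded prob_space_PiM_power)
  also have "\<dots> \<le> (\<integral>x. exp (l * (h x - Eh)) * exp (l\<^sup>2 * \<delta>\<^sup>2 / 8) \<partial>?N)"
    unfolding h_def using Suc.prems \<open>l > 0\<close> N.integrable_exp_bounded[OF h(1,2)]
    by (intro integral_mono_AE' AE_I2 integral_exp_fun_upd_last_le) (auto simp: h_def)
  also have "\<dots> = (\<integral>x. exp (l * (h x - Eh)) \<partial>?N) * exp (l\<^sup>2 * \<delta>\<^sup>2 / 8)"
    by simp
  also have "\<dots> \<le> exp (l\<^sup>2 * real m * \<delta>\<^sup>2 / 8) * exp (l\<^sup>2 * \<delta>\<^sup>2 / 8)"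
    using Suc.IH[OF h] unfolding Eh_def by (intro mult_right_mono) auto
  also have "\<dots> = exp (l\<^sup>2 * real (Suc m) * \<delta>\<^sup>2 / 8)"
    by (simp add: exp_add[symmetric] algebra_simps)
  finally show ?case .
qed

theorem mcdiarmid_inequality:
  assumes g: "g \<in> borel_measurable (PiM {..<m} (\<lambda>_. M))"
    and bounded: "\<And>x. x \<in> space (PiM {..<m} (\<lambda>_. M)) \<Longrightarrow> \<bar>g x\<bar> \<le> B"
    and diff: "bounded_differences M m \<delta> g" and "s > 0" "\<delta> > 0" "m \<ge> 1"
  shows "measure (PiM {..<m} (\<lambda>_. M))
      {x \<in> space (PiM {..<m} (\<lambda>_. M)). g x - (\<integral>x. g x \<partial>PiM {..<m} (\<lambda>_. M)) \<ge> s}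
     \<le> exp (- 2 * s\<^sup>2 / (real m * \<delta>\<^sup>2))"
proof -
  let ?N = "PiM {..<m} (\<lambda>_. M)"
  interpret N: prob_space ?N
    by (rule prob_space_PiM_power)
  define Eg where "Eg = (\<integral>x. g x \<partial>?N)"
  define l where "l = 4 * s / (real m * \<delta>\<^sup>2)"
  have "l > 0"
    unfolding l_def using assms by simp
  have "{x \<in> space ?N. g x - Eg \<ge> s} = {x \<in> space ?N. exp (l * (g x - Eg)) \<ge> exp (l * s)}"
    using \<open>l > 0\<close> by auto
  then have "measure ?N {x \<in> space ?N. g x - Eg \<ge> s} \<le> (\<integral>x. exp (l * (g x - Eg)) \<partial>?N) / exp (l * s)"
    using integral_Markov_inequality_measure[OF N.integrable_exp_bounded[OF g bounded, where l = l and c = Eg],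
        of "space ?N" "exp (l * s)"]
    by simp
  also have "\<dots> \<le> exp (l\<^sup>2 * real m * \<delta>\<^sup>2 / 8) / exp (l * s)"
    using mcdiarmid_exp_moment_le[OF g bounded diff \<open>l > 0\<close>] unfolding Eg_def by (intro divide_right_mono) auto
  also have "\<dots> = exp (- 2 * s\<^sup>2 / (real m * \<delta>\<^sup>2))"
    unfolding l_def exp_diff[symmetric] using assms by (simp add: field_simps power2_eq_square)
  finally show ?thesis
    unfolding Eg_def .
qed

end

section \<open>Symmetrization\<close>

lemma abs_SUP_diff_le:
  fixes f g :: "'c \<Rightarrow> real"
  assumes "\<And>\<theta>. \<bar>f \<theta> - g \<theta>\<bar> \<le> \<epsilon>" "C \<noteq> {}" "bdd_above (f ` C)" "bdd_above (g ` C)"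
  shows "\<bar>Sup (f ` C) - Sup (g ` C)\<bar> \<le> \<epsilon>"
proof -
  have "Sup (f ` C) \<le> Sup (g ` C) + \<epsilon>" "Sup (g ` C) \<le> Sup (f ` C) + \<epsilon>"
  proof -
    have "f \<theta> \<le> Sup (g ` C) + \<epsilon>" "g \<theta> \<le> Sup (f ` C) + \<epsilon>" if "\<theta> \<in> C" for \<theta>
      using assms(1)[of \<theta>] cSUP_upper[OF that assms(3)] cSUP_upper[OF that assms(4)] by (auto simp: abs_le_iff)
    then show "Sup (f ` C) \<le> Sup (g ` C) + \<epsilon>" "Sup (g ` C) \<le> Sup (f ` C) + \<epsilon>"
      using assms(2) by (auto intro!: cSUP_least)
  qed
  then show ?thesis
    by (simp add: abs_le_iff)
qed

lemma (in prob_space) AE_restrict_event: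
  assumes A: "A \<in> events" and "AE x in M. Q x"
  shows "\<exists>A'\<in>events. A' \<subseteq> A \<and> prob A' = prob A \<and> (\<forall>x\<in>A'. Q x)"
proof -
  obtain N where N: "{x \<in> space M. \<not> Q x} \<subseteq> N" "emeasure M N = 0" "N \<in> events"
    using assms(2) by (rule AE_E)
  then have "prob (A - N) = prob A"
    using measure_Diff_null_set[OF A] by blast
  with A N sets.sets_into_space[OF A] show ?thesis
    by (intro bexI[of _ "A - N"]) auto
qed

lemma abs_weighted_sum_le:
  fixes a e :: "nat \<Rightarrow> real"
  assumes "\<And>i. i < n \<Longrightarrow> \<bar>a i\<bar> \<le> 1"
  shows "\<bar>\<Sum>i<n. e i * a i\<bar> \<le> (\<Sum>i<n. \<bar>e i\<bar>)"
proof -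
  have "\<bar>\<Sum>i<n. e i * a i\<bar> \<le> (\<Sum>i<n. \<bar>e i * a i\<bar>)"
    by (rule sum_abs)
  also have "\<dots> \<le> (\<Sum>i<n. \<bar>e i\<bar>)"
    by (rule sum_mono) (use assms in \<open>auto simp: abs_mult intro: mult_left_le\<close>)
  finally show ?thesis .
qed

locale symmetrization =
  fixes D :: "'z measure" and C :: "'c set" and f :: "'c \<Rightarrow> 'z \<Rightarrow> real" and n :: nat
  assumes prob_space_D: "prob_space D" and C: "countable C" "C \<noteq> {}"
    and f_measurable: "\<And>\<theta>. \<theta> \<in> C \<Longrightarrow> f \<theta> \<in> borel_measurable D"
    and f_nonneg: "\<And>\<theta> z. 0 \<le> f \<theta> z" and f_le_1: "\<And>\<theta> z. f \<theta> z \<le> 1" and n: "n \<ge> 1"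
begin

interpretation D: prob_space D
  by (rule prob_space_D)

abbreviation sample :: "nat set \<Rightarrow> (nat \<Rightarrow> 'z) measure" where
  "sample I \<equiv> PiM I (\<lambda>_. D)"

lemma prob_space_sample: "prob_space (sample I)"
  by (rule D.prob_space_PiM_power)

definition risk :: "'c \<Rightarrow> real" where
  "risk \<theta> = (\<integral>z. f \<theta> z \<partial>D)"

definition emp_risk :: "'c \<Rightarrow> (nat \<Rightarrow> 'z) \<Rightarrow> real" where
  "emp_risk \<theta> x = (\<Sum>i<n. f \<theta> (x i)) / real n"

definition max_deviation :: "(nat \<Rightarrow> 'z) \<Rightarrow> real" where
  "max_deviation x = Sup ((\<lambda>\<theta>. risk \<theta> - emp_risk \<theta> x) ` C)"

text \<open>\<open>n\<close> times the empirical Rademacher complexity of the class on the sample \<open>x\<close>.\<close>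

definition rademacher :: "(nat \<Rightarrow> 'z) \<Rightarrow> real" where
  "rademacher x = sign_avg n (\<lambda>e. Sup ((\<lambda>\<theta>. \<Sum>i<n. e i * f \<theta> (x i)) ` C))"

lemma abs_f_le_1: "\<bar>f \<theta> z\<bar> \<le> 1"
  by (metis abs_of_nonneg f_nonneg f_le_1)

lemma risk_bounds: "0 \<le> risk \<theta>" "risk \<theta> \<le> 1"
proof -
  show "0 \<le> risk \<theta>"
    unfolding risk_def by (rule integral_nonneg_AE) (simp add: f_nonneg)
  show "risk \<theta> \<le> 1"
    unfolding risk_def using D.abs_integral_le_const[of "f \<theta>" 1] abs_f_le_1 by (simp add: abs_le_iff)
qed

lemma emp_risk_bounds: "0 \<le> emp_risk \<theta> x" "emp_risk \<theta> x \<le> 1"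
proof -
  show "0 \<le> emp_risk \<theta> x"
    unfolding emp_risk_def by (simp add: sum_nonneg f_nonneg)
  have "(\<Sum>i<n. f \<theta> (x i)) \<le> real n"
    using sum_mono[of "{..<n}" "\<lambda>i. f \<theta> (x i)" "\<lambda>_. 1"] f_le_1 by simp
  then show "emp_risk \<theta> x \<le> 1"
    unfolding emp_risk_def using n by simp
qed

lemma deviation_le_1: "risk \<theta> - emp_risk \<theta> x \<le> 1"
  using risk_bounds(2)[of \<theta>] emp_risk_bounds(1)[of \<theta> x] by linarith

lemma bdd_above_deviation: "bdd_above ((\<lambda>\<theta>. risk \<theta> - emp_risk \<theta> x) ` C)"
  using deviation_le_1 by (intro bdd_aboveI[of _ 1]) auto

lemma abs_max_deviation_le: "\<bar>max_deviation x\<bar> \<le> 1"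
proof -
  obtain \<theta> where "\<theta> \<in> C"
    using C by blast
  then have "risk \<theta> - emp_risk \<theta> x \<le> max_deviation x"
    unfolding max_deviation_def using bdd_above_deviation by (rule cSUP_upper)
  moreover have "max_deviation x \<le> 1"
    unfolding max_deviation_def using C deviation_le_1 by (intro cSUP_least) auto
  ultimately show ?thesis
    using risk_bounds[of \<theta>] emp_risk_bounds[of \<theta> x] by (simp add: abs_le_iff)
qed

lemma measurable_f_component:
  "\<theta> \<in> C \<Longrightarrow> j \<in> K \<Longrightarrow> (\<lambda>w. f \<theta> (w j)) \<in> borel_measurable (sample K)"
  using measurable_comp[OF measurable_component_singleton[of j K "\<lambda>_. D"] f_measurable[of \<theta>]]
  by (simp add: comp_def)

lemma max_deviation_measurable: "max_deviation \<in> borel_measurable (sample {..<n})"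
  unfolding max_deviation_def
proof (rule borel_measurable_cSUP[OF C(1) _ bdd_above_deviation])
  fix \<theta> assume "\<theta> \<in> C"
  then show "(\<lambda>x. risk \<theta> - emp_risk \<theta> x) \<in> borel_measurable (sample {..<n})"
    unfolding emp_risk_def
    by (intro borel_measurable_diff borel_measurable_divide borel_measurable_sum measurable_f_component) auto
qed

lemma bdd_above_weighted_sum:
  fixes a :: "'c \<Rightarrow> nat \<Rightarrow> real" and e :: "nat \<Rightarrow> real"
  assumes "\<And>\<theta> i. \<bar>a \<theta> i\<bar> \<le> 1"
  shows "bdd_above ((\<lambda>\<theta>. \<Sum>i<n. e i * a \<theta> i) ` C)"
proof (rule bdd_aboveI[of _ "\<Sum>i<n. \<bar>e i\<bar>"])
  fix x assume "x \<in> (\<lambda>\<theta>. \<Sum>i<n. e i * a \<theta> i) ` C"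
  then obtain \<theta> where "x = (\<Sum>i<n. e i * a \<theta> i)"
    by auto
  with abs_weighted_sum_le[of n "a \<theta>" e] assms show "x \<le> (\<Sum>i<n. \<bar>e i\<bar>)"
    by (simp add: abs_le_iff)
qed

lemma abs_Sup_weighted_sum_le:
  fixes a :: "'c \<Rightarrow> nat \<Rightarrow> real" and e :: "nat \<Rightarrow> real"
  assumes "\<And>\<theta> i. \<bar>a \<theta> i\<bar> \<le> 1"
  shows "\<bar>Sup ((\<lambda>\<theta>. \<Sum>i<n. e i * a \<theta> i) ` C)\<bar> \<le> (\<Sum>i<n. \<bar>e i\<bar>)"
proof -
  have bound: "\<bar>\<Sum>i<n. e i * a \<theta> i\<bar> \<le> (\<Sum>i<n. \<bar>e i\<bar>)" for \<theta>
    using assms by (rule abs_weighted_sum_le)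
  obtain \<theta> where "\<theta> \<in> C"
    using C by blast
  then have "(\<Sum>i<n. e i * a \<theta> i) \<le> Sup ((\<lambda>\<theta>. \<Sum>i<n. e i * a \<theta> i) ` C)"
    using bdd_above_weighted_sum[where a = a, OF assms] by (rule cSUP_upper)
  moreover have "Sup ((\<lambda>\<theta>. \<Sum>i<n. e i * a \<theta> i) ` C) \<le> (\<Sum>i<n. \<bar>e i\<bar>)"
    using C bound by (intro cSUP_least) (auto simp: abs_le_iff)
  ultimately show ?thesis
    using bound[of \<theta>] by (simp add: abs_le_iff)
qed

lemma Sup_weighted_sum_measurable:
  fixes a :: "'c \<Rightarrow> nat \<Rightarrow> 'w \<Rightarrow> real" and e :: "nat \<Rightarrow> real"
  assumes "\<And>\<theta> i. \<theta> \<in> C \<Longrightarrow> i < n \<Longrightarrow> (\<lambda>w. a \<theta> i w) \<in> borel_measurable M"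
    and "\<And>\<theta> i w. \<bar>a \<theta> i w\<bar> \<le> 1"
  shows "(\<lambda>w. Sup ((\<lambda>\<theta>. \<Sum>i<n. e i * a \<theta> i w) ` C)) \<in> borel_measurable M"
proof (rule borel_measurable_cSUP[OF C(1)])
  show "(\<lambda>w. \<Sum>i<n. e i * a \<theta> i w) \<in> borel_measurable M" if "\<theta> \<in> C" for \<theta>
    using assms(1) that by auto
  show "bdd_above ((\<lambda>\<theta>. \<Sum>i<n. e i * a \<theta> i w) ` C)" for w
    using assms(2) by (rule bdd_above_weighted_sum)
qed

lemma rademacher_measurable:
  "(\<And>i. i < n \<Longrightarrow> j i \<in> K) \<Longrightarrow> (\<lambda>w. rademacher (\<lambda>i. w (j i))) \<in> borel_measurable (sample K)"
  unfolding rademacher_def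
  by (intro sign_avg_measurable Sup_weighted_sum_measurable measurable_f_component abs_f_le_1) auto

lemma abs_rademacher_le: "\<bar>rademacher x\<bar> \<le> real n"
proof -
  have "\<bar>Sup ((\<lambda>\<theta>. \<Sum>i<n. e i * f \<theta> (x i)) ` C)\<bar> \<le> real n" if "sign_vector n e" for e
    using abs_Sup_weighted_sum_le[of "\<lambda>\<theta> i. f \<theta> (x i)" e] abs_f_le_1 abs_sign_vector[OF that] by simp
  then have "sign_avg n (\<lambda>_. - real n) \<le> rademacher x" "rademacher x \<le> sign_avg n (\<lambda>_. real n)"
    unfolding rademacher_def by (intro sign_avg_mono; force simp: abs_le_iff)+
  then show ?thesis
    by simp
qed

lemma rademacher_cong: "(\<And>i. i < n \<Longrightarrow> x i = x' i) \<Longrightarrow> rademacher x = rademacher x'"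
  unfolding rademacher_def by (intro sign_avg_cong arg_cong[where f = Sup] image_cong refl sum.cong) auto

lemma integrable_rademacher:
  "(\<And>i. i < n \<Longrightarrow> j i \<in> K) \<Longrightarrow> integrable (sample K) (\<lambda>w. rademacher (\<lambda>i. w (j i)))"
  using prob_space.integrable_bounded[OF prob_space_sample rademacher_measurable abs_rademacher_le] .

lemma integral_component_eq_risk:
  assumes "\<theta> \<in> C" "j \<in> K"
  shows "(\<integral>w. f \<theta> (w j) \<partial>sample K) = risk \<theta>"
proof -
  have "risk \<theta> = (\<integral>z. f \<theta> z \<partial>distr (sample K) D (\<lambda>w. w j))"
    unfolding risk_def using distr_PiM_component[of K "\<lambda>_. D" j] prob_space_D assms(2) by simp
  also have "\<dots> = (\<integral>w. f \<theta> (w j) \<partial>sample K)"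
    by (rule integral_distr[OF measurable_component_singleton[OF assms(2)] f_measurable[OF assms(1)]])
  finally show ?thesis ..
qed

text \<open>In \<open>sample {..<2 * n}\<close> the coordinates \<open>i < n\<close> form the sample and the coordinates
  \<open>n + i\<close> an independent ghost sample.\<close>

lemma integral_sample_split:
  fixes g :: "(nat \<Rightarrow> 'z) \<Rightarrow> real"
  assumes "integrable (sample {..<2 * n}) g"
  shows "(\<integral>w. g w \<partial>sample {..<2 * n})
    = (\<integral>x. (\<integral>y. g (merge {..<n} {n..<2 * n} (x, y)) \<partial>sample {n..<2 * n}) \<partial>sample {..<n})"
proof -
  interpret product_sigma_finite "\<lambda>_. D"
    by (simp add: product_sigma_finite_def D.sigma_finite_measure_axioms)
  have "{..<n} \<union> {n..<2 * n} = {..<2 * n}"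
    by auto
  then show ?thesis
    using product_integral_fold[of "{..<n}" "{n..<2 * n}" g] assms by (simp add: ivl_disj_int)
qed

lemma integral_rademacher_shift:
  "(\<integral>y. rademacher (\<lambda>i. y (n + i)) \<partial>sample {n..<2 * n}) = (\<integral>x. rademacher x \<partial>sample {..<n})"
proof -
  let ?shift = "\<lambda>y. \<lambda>i\<in>{..<n}. y (n + i)"
  have "distr (sample {n..<2 * n}) (sample {..<n}) ?shift = sample {..<n}"
    using distr_PiM_reindex[of "{n..<2 * n}" "\<lambda>_. D" "\<lambda>i. n + i" "{..<n}"] prob_space_D
    by (auto simp: inj_on_def)
  moreover have "?shift \<in> measurable (sample {n..<2 * n}) (sample {..<n})"
    by (rule measurable_restrict) auto
  moreover have "rademacher \<in> borel_measurable (sample {..<n})"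
    using rademacher_measurable[of "\<lambda>i. i" "{..<n}"] by simp
  ultimately have "(\<integral>x. rademacher x \<partial>sample {..<n}) = (\<integral>y. rademacher (?shift y) \<partial>sample {n..<2 * n})"
    by (metis integral_distr)
  also have "\<dots> = (\<integral>y. rademacher (\<lambda>i. y (n + i)) \<partial>sample {n..<2 * n})"
    by (intro Bochner_Integration.integral_cong refl rademacher_cong) auto
  finally show ?thesis ..
qed

lemma integral_rademacher_halves:
  "(\<integral>w. rademacher w \<partial>sample {..<2 * n}) = (\<integral>x. rademacher x \<partial>sample {..<n})"
  "(\<integral>w. rademacher (\<lambda>i. w (n + i)) \<partial>sample {..<2 * n}) = (\<integral>x. rademacher x \<partial>sample {..<n})"
proof -
  interpret P: prob_space "sample {..<n}"
    by (rule prob_space_sample)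
  interpret Q: prob_space "sample {n..<2 * n}"
    by (rule prob_space_sample)
  have "(\<integral>w. rademacher (\<lambda>i. w i) \<partial>sample {..<2 * n})
      = (\<integral>x. (\<integral>y. rademacher (\<lambda>i. merge {..<n} {n..<2 * n} (x, y) i) \<partial>sample {n..<2 * n}) \<partial>sample {..<n})"
    by (rule integral_sample_split[OF integrable_rademacher]) auto
  also have "\<dots> = (\<integral>x. rademacher x \<partial>sample {..<n})"
    by (simp add: rademacher_cong[of "\<lambda>i. merge _ _ _ i"] merge_def Q.prob_space cong: rademacher_cong)
  finally show "(\<integral>w. rademacher w \<partial>sample {..<2 * n}) = (\<integral>x. rademacher x \<partial>sample {..<n})"
    by simp
  have "(\<integral>w. rademacher (\<lambda>i. w (n + i)) \<partial>sample {..<2 * n})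
      = (\<integral>x. (\<integral>y. rademacher (\<lambda>i. merge {..<n} {n..<2 * n} (x, y) (n + i)) \<partial>sample {n..<2 * n}) \<partial>sample {..<n})"
    by (rule integral_sample_split[OF integrable_rademacher]) auto
  also have "\<dots> = (\<integral>x. rademacher x \<partial>sample {..<n})"
    by (simp add: merge_def integral_rademacher_shift P.prob_space cong: rademacher_cong)
  finally show "(\<integral>w. rademacher (\<lambda>i. w (n + i)) \<partial>sample {..<2 * n}) = (\<integral>x. rademacher x \<partial>sample {..<n})" .
qed

definition ghost_gap :: "(nat \<Rightarrow> real) \<Rightarrow> (nat \<Rightarrow> 'z) \<Rightarrow> real" where
  "ghost_gap e w = Sup ((\<lambda>\<theta>. \<Sum>i<n. e i / real n * (f \<theta> (w (n + i)) - f \<theta> (w i))) ` C)"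

lemma abs_f_diff_le_1: "\<bar>f \<theta> a - f \<theta> b\<bar> \<le> 1"
  using f_nonneg[of \<theta> a] f_le_1[of \<theta> a] f_nonneg[of \<theta> b] f_le_1[of \<theta> b] by (simp add: abs_le_iff)

lemma ghost_gap_measurable: "ghost_gap e \<in> borel_measurable (sample {..<2 * n})"
  unfolding ghost_gap_def
  by (intro Sup_weighted_sum_measurable borel_measurable_diff measurable_f_component abs_f_diff_le_1) auto

lemma abs_ghost_gap_le: "\<bar>ghost_gap e w\<bar> \<le> (\<Sum>i<n. \<bar>e i / real n\<bar>)"
  unfolding ghost_gap_def by (rule abs_Sup_weighted_sum_le) (rule abs_f_diff_le_1)

lemma integrable_ghost_gap: "integrable (sample {..<2 * n}) (ghost_gap e)"
  by (rule prob_space.integrable_bounded[OF prob_space_sample ghost_gap_measurable abs_ghost_gap_le])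

text \<open>Swapping \<open>w i\<close> with the ghost point \<open>w (n + i)\<close> whenever \<open>e i = -1\<close> preserves
  the product measure and turns \<open>ghost_gap (\<lambda>_. 1)\<close> into \<open>ghost_gap e\<close>.\<close>

lemma integral_ghost_gap_sign_invariant:
  assumes e: "sign_vector n e"
  shows "(\<integral>w. ghost_gap e w \<partial>sample {..<2 * n}) = (\<integral>w. ghost_gap (\<lambda>_. 1) w \<partial>sample {..<2 * n})"
proof -
  let ?K = "{..<2 * n}"
  define \<pi> where "\<pi> j = (if j < n then (if e j = -1 then j + n else j)
      else (if e (j - n) = -1 then j - n else j))" for j
  let ?swap = "\<lambda>w. \<lambda>j\<in>?K. w (\<pi> j)"
  have "inj_on \<pi> ?K" "\<pi> \<in> ?K \<rightarrow> ?K"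
    unfolding inj_on_def \<pi>_def by (auto split: if_splits)
  then have "distr (sample ?K) (sample ?K) ?swap = sample ?K"
    using distr_PiM_reindex[of ?K "\<lambda>_. D" \<pi> ?K] prob_space_D by auto
  moreover have "?swap \<in> measurable (sample ?K) (sample ?K)"
    using \<open>\<pi> \<in> ?K \<rightarrow> ?K\<close> by (intro measurable_restrict measurable_component_singleton) auto
  ultimately have "(\<integral>w. ghost_gap (\<lambda>_. 1) w \<partial>sample ?K) = (\<integral>w. ghost_gap (\<lambda>_. 1) (?swap w) \<partial>sample ?K)"
    using ghost_gap_measurable by (metis integral_distr)
  also have "\<dots> = (\<integral>w. ghost_gap e w \<partial>sample ?K)"
  proof (intro Bochner_Integration.integral_cong refl)
    fix w
    have "1 / real n * (f \<theta> (?swap w (n + i)) - f \<theta> (?swap w i)) = e i / real n * (f \<theta> (w (n + i)) - f \<theta> (w i))"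
      if "i < n" for \<theta> i
      using e that unfolding sign_vector_def \<pi>_def by (auto simp: add.commute field_simps)
    then show "ghost_gap (\<lambda>_. 1) (?swap w) = ghost_gap e w"
      unfolding ghost_gap_def by (intro arg_cong[where f = Sup] image_cong refl sum.cong) auto
  qed
  finally show ?thesis ..
qed

lemma sign_avg_ghost_gap_le:
  "sign_avg n (\<lambda>e. ghost_gap e w) \<le> (rademacher (\<lambda>i. w (n + i)) + rademacher w) / real n"
proof -
  define R where "R w = (\<lambda>e. Sup ((\<lambda>\<theta>. \<Sum>i<n. e i * f \<theta> (w i)) ` C))" for w
  have "sign_avg n (\<lambda>e. ghost_gap e w) \<le> sign_avg n (\<lambda>e. R (\<lambda>i. w (n + i)) e / real n + R w (\<lambda>i. - e i) / real n)"
  proof (rule sign_avg_mono)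
    fix e :: "nat \<Rightarrow> real"
    show "ghost_gap e w \<le> R (\<lambda>i. w (n + i)) e / real n + R w (\<lambda>i. - e i) / real n"
      unfolding ghost_gap_def
    proof (rule cSUP_least[OF C(2)])
      fix \<theta> assume "\<theta> \<in> C"
      have "(\<Sum>i<n. e i / real n * (f \<theta> (w (n + i)) - f \<theta> (w i)))
          = (\<Sum>i<n. e i * f \<theta> (w (n + i))) / real n + (\<Sum>i<n. - e i * f \<theta> (w i)) / real n"
        by (simp add: sum_divide_distrib sum.distrib[symmetric] field_simps sum_subtractf[symmetric])
      also have "\<dots> \<le> R (\<lambda>i. w (n + i)) e / real n + R w (\<lambda>i. - e i) / real n"
        unfolding R_def using \<open>\<theta> \<in> C\<close>
        by (intro add_mono divide_right_mono cSUP_upper bdd_above_weighted_sum abs_f_le_1) auto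
      finally show "(\<Sum>i<n. e i / real n * (f \<theta> (w (n + i)) - f \<theta> (w i)))
          \<le> R (\<lambda>i. w (n + i)) e / real n + R w (\<lambda>i. - e i) / real n" .
    qed
  qed
  also have "\<dots> = (rademacher (\<lambda>i. w (n + i)) + rademacher w) / real n"
    unfolding sign_avg_add sign_avg_divide sign_avg_uminus[of n "R w"]
    by (simp add: rademacher_def R_def add_divide_distrib)
  finally show ?thesis .
qed

lemma ghost_gap_merge_measurable:
  "(\<lambda>(x, y). ghost_gap e (merge {..<n} {n..<2 * n} (x, y)))
    \<in> borel_measurable (sample {..<n} \<Otimes>\<^sub>M sample {n..<2 * n})"
proof -
  have "{..<n} \<union> {n..<2 * n} = {..<2 * n}"
    by auto
  then have "merge {..<n} {n..<2 * n} \<in> measurable (sample {..<n} \<Otimes>\<^sub>M sample {n..<2 * n}) (sample {..<2 * n})"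
    using measurable_merge[of "{..<n}" "{n..<2 * n}" "\<lambda>_. D"] by simp
  from measurable_comp[OF this ghost_gap_measurable[of e]] show ?thesis
    by (simp add: comp_def case_prod_beta)
qed

lemma deviation_le_integral_ghost_gap:
  assumes "\<theta> \<in> C" "x \<in> space (sample {..<n})"
  shows "risk \<theta> - emp_risk \<theta> x
    \<le> (\<integral>y. ghost_gap (\<lambda>_. 1) (merge {..<n} {n..<2 * n} (x, y)) \<partial>sample {n..<2 * n})"
proof -
  let ?Q = "sample {n..<2 * n}" and ?xy = "\<lambda>y. merge {..<n} {n..<2 * n} (x, y)"
  interpret Q: prob_space ?Q
    by (rule prob_space_sample)
  define g where "g i y = (f \<theta> (y (n + i)) - f \<theta> (x i)) / real n" for i y
  have g: "integrable ?Q (g i)" "(\<integral>y. g i y \<partial>?Q) = (risk \<theta> - f \<theta> (x i)) / real n" if "i < n" for i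
  proof -
    have "integrable ?Q (\<lambda>y. f \<theta> (y (n + i)))"
      using that by (intro Q.integrable_bounded[where B = 1] measurable_f_component[OF assms(1)] abs_f_le_1) auto
    moreover have "(\<integral>y. f \<theta> (y (n + i)) \<partial>?Q) = risk \<theta>"
      using that by (intro integral_component_eq_risk[OF assms(1)]) auto
    ultimately show "integrable ?Q (g i)" "(\<integral>y. g i y \<partial>?Q) = (risk \<theta> - f \<theta> (x i)) / real n"
      unfolding g_def by (simp_all add: Q.prob_space)
  qed
  have "risk \<theta> - emp_risk \<theta> x = (\<Sum>i<n. (risk \<theta> - f \<theta> (x i)) / real n)"
    using n by (simp add: emp_risk_def sum_subtractf diff_divide_distrib sum_divide_distrib)
  also have "\<dots> = (\<integral>y. (\<Sum>i<n. g i y) \<partial>?Q)"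
    using g by (simp add: Bochner_Integration.integral_sum)
  also have "\<dots> \<le> (\<integral>y. ghost_gap (\<lambda>_. 1) (?xy y) \<partial>?Q)"
  proof (rule integral_mono)
    show "integrable ?Q (\<lambda>y. \<Sum>i<n. g i y)"
      using g by auto
    show "integrable ?Q (\<lambda>y. ghost_gap (\<lambda>_. 1) (?xy y))"
      using measurable_Pair2[OF ghost_gap_merge_measurable assms(2)] abs_ghost_gap_le
      by (intro Q.integrable_bounded) auto
    fix y
    have "(\<Sum>i<n. g i y) = (\<Sum>i<n. 1 / real n * (f \<theta> (?xy y (n + i)) - f \<theta> (?xy y i)))"
      unfolding g_def by (intro sum.cong refl) (auto simp: merge_def)
    also have "\<dots> \<le> ghost_gap (\<lambda>_. 1) (?xy y)"
      unfolding ghost_gap_def using assms(1)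
      by (intro cSUP_upper bdd_above_weighted_sum abs_f_diff_le_1)
    finally show "(\<Sum>i<n. g i y) \<le> ghost_gap (\<lambda>_. 1) (?xy y)" .
  qed
  finally show ?thesis .
qed

lemma integral_max_deviation_le_ghost_gap:
  "(\<integral>x. max_deviation x \<partial>sample {..<n}) \<le> (\<integral>w. ghost_gap (\<lambda>_. 1) w \<partial>sample {..<2 * n})"
proof -
  let ?P = "sample {..<n}" and ?Q = "sample {n..<2 * n}"
  let ?G = "\<lambda>x. \<integral>y. ghost_gap (\<lambda>_. 1) (merge {..<n} {n..<2 * n} (x, y)) \<partial>?Q"
  interpret P: prob_space ?P
    by (rule prob_space_sample)
  interpret Q: prob_space ?Q
    by (rule prob_space_sample)
  have "(\<integral>x. max_deviation x \<partial>?P) \<le> (\<integral>x. ?G x \<partial>?P)"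
  proof (rule integral_mono)
    show "integrable ?P max_deviation"
      using max_deviation_measurable abs_max_deviation_le by (rule P.integrable_bounded)
    show "integrable ?P ?G"
      using Q.borel_measurable_lebesgue_integral[OF ghost_gap_merge_measurable] abs_ghost_gap_le
      by (intro P.integrable_bounded Q.abs_integral_le_const)
    show "max_deviation x \<le> ?G x" if "x \<in> space ?P" for x
      unfolding max_deviation_def using C(2) deviation_le_integral_ghost_gap[OF _ that]
      by (intro cSUP_least) auto
  qed
  also have "\<dots> = (\<integral>w. ghost_gap (\<lambda>_. 1) w \<partial>sample {..<2 * n})"
    by (rule integral_sample_split[OF integrable_ghost_gap, symmetric])
  finally show ?thesis .
qed

theorem symmetrization_inequality:
  "(\<integral>x. max_deviation x \<partial>sample {..<n}) \<le> 2 / real n * (\<integral>x. rademacher x \<partial>sample {..<n})"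
proof -
  let ?W = "sample {..<2 * n}"
  have "(\<integral>x. max_deviation x \<partial>sample {..<n}) \<le> sign_avg n (\<lambda>e. \<integral>w. ghost_gap e w \<partial>?W)"
    using integral_max_deviation_le_ghost_gap integral_ghost_gap_sign_invariant
    by (simp add: sign_avg_cong[of n _ "\<lambda>_. \<integral>w. ghost_gap (\<lambda>_. 1) w \<partial>?W"])
  also have "\<dots> = (\<integral>w. sign_avg n (\<lambda>e. ghost_gap e w) \<partial>?W)"
    by (rule integral_sign_avg[OF integrable_ghost_gap, symmetric])
  also have "\<dots> \<le> (\<integral>w. (rademacher (\<lambda>i. w (n + i)) + rademacher w) / real n \<partial>?W)"
    using integrable_rademacher[of "\<lambda>i. n + i" "{..<2 * n}"] integrable_rademacher[of "\<lambda>i. i" "{..<2 * n}"]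
    by (intro integral_mono integrable_sign_avg integrable_ghost_gap sign_avg_ghost_gap_le) auto
  also have "\<dots> = 2 / real n * (\<integral>x. rademacher x \<partial>sample {..<n})"
    using integrable_rademacher[of "\<lambda>i. n + i" "{..<2 * n}"] integrable_rademacher[of "\<lambda>i. i" "{..<2 * n}"]
    by (simp add: integral_rademacher_halves)
  finally show ?thesis .
qed

lemma bounded_differences_max_deviation: "bounded_differences D n (1 / real n) max_deviation"
  unfolding bounded_differences_def
proof (intro ballI allI impI)
  fix x i y assume "i < n"
  have gap: "\<bar>(risk \<theta> - emp_risk \<theta> x) - (risk \<theta> - emp_risk \<theta> (x(i := y)))\<bar> \<le> 1 / real n" for \<theta>
  proof -
    have "(\<Sum>j<n. f \<theta> (x j)) = f \<theta> (x i) + (\<Sum>j\<in>{..<n} - {i}. f \<theta> (x j))"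
      using \<open>i < n\<close> by (intro sum.remove) auto
    moreover have "(\<Sum>j<n. f \<theta> ((x(i := y)) j)) = f \<theta> y + (\<Sum>j\<in>{..<n} - {i}. f \<theta> (x j))"
      using \<open>i < n\<close> sum.remove[of "{..<n}" i "\<lambda>j. f \<theta> ((x(i := y)) j)"] by simp
    ultimately have "\<bar>(risk \<theta> - emp_risk \<theta> x) - (risk \<theta> - emp_risk \<theta> (x(i := y)))\<bar>
        = \<bar>f \<theta> (x i) - f \<theta> y\<bar> / real n"
      by (simp add: emp_risk_def diff_divide_distrib[symmetric] abs_minus_commute)
    also have "\<dots> \<le> 1 / real n"
      by (intro divide_right_mono abs_f_diff_le_1) auto
    finally show ?thesis .
  qed
  show "\<bar>max_deviation x - max_deviation (x(i := y))\<bar> \<le> 1 / real n"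
    unfolding max_deviation_def by (intro abs_SUP_diff_le gap C(2) bdd_above_deviation)
qed

theorem uniform_deviation_bound:
  assumes "0 < \<delta>" "\<delta> < 1"
  shows "\<exists>A\<in>sets (sample {..<n}). measure (sample {..<n}) A \<ge> 1 - \<delta> \<and>
    (\<forall>x\<in>A. \<forall>\<theta>\<in>C. risk \<theta> \<le> emp_risk \<theta> x + sqrt (ln (1 / \<delta>) / (2 * real n))
       + 2 / real n * (\<integral>x. rademacher x \<partial>sample {..<n}))"
proof -
  let ?P = "sample {..<n}"
  interpret P: prob_space ?P
    by (rule prob_space_sample)
  define s where "s = sqrt (ln (1 / \<delta>) / (2 * real n))"
  define EZ where "EZ = (\<integral>x. max_deviation x \<partial>?P)"
  define A where "A = {x \<in> space ?P. max_deviation x < EZ + s}"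
  have "s > 0"
    unfolding s_def using assms n by simp
  have "measure ?P {x \<in> space ?P. max_deviation x - EZ \<ge> s} \<le> exp (- 2 * s\<^sup>2 / (real n * (1 / real n)\<^sup>2))"
    unfolding EZ_def using n \<open>s > 0\<close>
    by (intro D.mcdiarmid_inequality[where B = 1] max_deviation_measurable abs_max_deviation_le
        bounded_differences_max_deviation) auto
  also have "\<dots> = \<delta>"
    unfolding s_def using assms n by (simp add: power2_eq_square field_simps ln_div)
  finally have tail: "measure ?P {x \<in> space ?P. max_deviation x - EZ \<ge> s} \<le> \<delta>" .
  have "A = space ?P - {x \<in> space ?P. max_deviation x - EZ \<ge> s}"
    unfolding A_def by auto
  moreover have "{x \<in> space ?P. max_deviation x - EZ \<ge> s} \<in> sets ?P"
    using max_deviation_measurable by measurable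
  ultimately have "measure ?P A \<ge> 1 - \<delta>"
    using P.prob_compl tail by simp
  moreover have "A \<in> sets ?P"
    unfolding A_def using max_deviation_measurable by measurable
  moreover have "risk \<theta> \<le> emp_risk \<theta> x + s + 2 / real n * (\<integral>x. rademacher x \<partial>?P)"
    if "x \<in> A" "\<theta> \<in> C" for x \<theta>
  proof -
    have "risk \<theta> - emp_risk \<theta> x \<le> max_deviation x"
      unfolding max_deviation_def using that(2) bdd_above_deviation by (rule cSUP_upper)
    then show ?thesis
      using that(1) symmetrization_inequality unfolding A_def EZ_def by simp
  qed
  ultimately show ?thesis
    unfolding s_def by blast
qed


corollary uniform_deviation_bound_AE:
  assumes "0 < \<delta>" "\<delta> < 1" and AE_Q: "AE x in sample {..<n}. Q x"
    and rademacher_le: "\<And>x. Q x \<Longrightarrow> rademacher x \<le> R"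
  shows "\<exists>A\<in>sets (sample {..<n}). measure (sample {..<n}) A \<ge> 1 - \<delta> \<and>
    (\<forall>x\<in>A. Q x \<and> (\<forall>\<theta>\<in>C. risk \<theta> \<le> emp_risk \<theta> x + sqrt (ln (1 / \<delta>) / (2 * real n)) + 2 * R / real n))"
proof -
  interpret P: prob_space "sample {..<n}"
    by (rule prob_space_sample)
  obtain A where A: "A \<in> sets (sample {..<n})" "measure (sample {..<n}) A \<ge> 1 - \<delta>"
    "\<And>x \<theta>. x \<in> A \<Longrightarrow> \<theta> \<in> C \<Longrightarrow> risk \<theta> \<le> emp_risk \<theta> x + sqrt (ln (1 / \<delta>) / (2 * real n))
       + 2 / real n * (\<integral>x. rademacher x \<partial>sample {..<n})"
    using uniform_deviation_bound[OF assms(1,2)] by blast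
  have "(\<integral>x. rademacher x \<partial>sample {..<n}) \<le> R"
    using AE_Q integrable_rademacher[of "\<lambda>i. i" "{..<n}"] rademacher_le
    by (intro P.integral_le_const) (auto elim: AE_mp)
  then have "2 / real n * (\<integral>x. rademacher x \<partial>sample {..<n}) \<le> 2 * R / real n"
    by (simp add: divide_right_mono)
  moreover obtain A' where "A' \<in> sets (sample {..<n})" "A' \<subseteq> A"
    "measure (sample {..<n}) A' = measure (sample {..<n}) A" "\<forall>x\<in>A'. Q x"
    using P.AE_restrict_event[OF A(1) AE_Q] by blast
  ultimately show ?thesis
    using A(2,3) by (intro bexI[of _ A']) force+
qed
end

theorem rademacher_generalization_bound:
  fixes D :: "'z measure" and f :: "'c \<Rightarrow> 'z \<Rightarrow> real"
  assumes "prob_space D" "countable C" "\<And>\<theta>. \<theta> \<in> C \<Longrightarrow> f \<theta> \<in> borel_measurable D"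
    and "\<And>\<theta> z. 0 \<le> f \<theta> z" "\<And>\<theta> z. f \<theta> z \<le> 1" "n \<ge> 1" "0 < \<delta>" "\<delta> < 1"
    and AE_Q: "AE x in PiM {..<n} (\<lambda>_. D). Q x"
    and rademacher: "\<And>x. Q x \<Longrightarrow> C \<noteq> {} \<Longrightarrow> sign_avg n (\<lambda>e. Sup ((\<lambda>\<theta>. \<Sum>i<n. e i * f \<theta> (x i)) ` C)) \<le> R"
  shows "\<exists>A\<in>sets (PiM {..<n} (\<lambda>_. D)). measure (PiM {..<n} (\<lambda>_. D)) A \<ge> 1 - \<delta> \<and>
    (\<forall>x\<in>A. Q x \<and> (\<forall>\<theta>\<in>C. (\<integral>z. f \<theta> z \<partial>D)
       \<le> (\<Sum>i<n. f \<theta> (x i)) / real n + sqrt (ln (1 / \<delta>) / (2 * real n)) + 2 * R / real n))"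
proof (cases "C = {}")
  case True
  interpret P: prob_space "PiM {..<n} (\<lambda>_. D)"
    by (rule prob_space.prob_space_PiM_power) fact
  from P.AE_restrict_event[OF sets.top AE_Q] obtain A where
    "A \<in> P.events" "P.prob A = 1" "\<forall>x\<in>A. Q x"
    by (auto simp: P.prob_space)
  with \<open>0 < \<delta>\<close> True show ?thesis
    by (intro bexI[of _ A]) auto
next
  case False
  interpret symmetrization D C f n
    by (rule symmetrization.intro) (use assms False in auto)
  from uniform_deviation_bound_AE[OF \<open>0 < \<delta>\<close> \<open>\<delta> < 1\<close> AE_Q] rademacher False show ?thesis
    unfolding risk_def emp_risk_def rademacher_def by blast
qed

lemma continuous_on_integral_dominated:
  fixes g :: "'p::{first_countable_topology, t2_space} \<Rightarrow> 'a \<Rightarrow> real"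
  assumes "\<And>\<theta>. g \<theta> \<in> borel_measurable M" "AE z in M. continuous_on UNIV (\<lambda>\<theta>. g \<theta> z)"
    and "\<And>\<theta>. AE z in M. \<bar>g \<theta> z\<bar> \<le> w z" "integrable M w"
  shows "continuous_on UNIV (\<lambda>\<theta>. \<integral>z. g \<theta> z \<partial>M)"
proof (rule continuous_on_sequentiallyI)
  fix u :: "nat \<Rightarrow> 'p" and a assume "u \<longlonglongrightarrow> a"
  have "AE z in M. (\<lambda>i. g (u i) z) \<longlonglongrightarrow> g a z"
    using assms(2) by eventually_elim (rule continuous_on_tendsto_compose[OF _ \<open>u \<longlonglongrightarrow> a\<close>], auto)
  then show "(\<lambda>i. \<integral>z. g (u i) z \<partial>M) \<longlonglongrightarrow> (\<integral>z. g a z \<partial>M)"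
    using assms(3)[of "u _"] by (intro integral_dominated_convergence[where w = w] assms(1,4)) simp_all
qed

lemma net_loss_measurable:
  assumes "sets D = sets (borel \<Otimes>\<^sub>M borel)" "(\<lambda>(y, u). d y u) \<in> borel_measurable (borel \<Otimes>\<^sub>M borel)"
  shows "(\<lambda>z. d (snd z) (net ds k \<theta> (fst z) 0)) \<in> borel_measurable D"
proof -
  have "(\<lambda>x. net ds k \<theta> x 0) \<in> borel_measurable borel"
    by (rule borel_measurable_continuous_onI[OF continuous_on_net_input])
  then have "(\<lambda>z. (snd z, net ds k \<theta> (fst z) 0)) \<in> measurable (borel \<Otimes>\<^sub>M borel) (borel \<Otimes>\<^sub>M (borel :: real measure))"
    by measurable
  from measurable_comp[OF this assms(2)] show ?thesis
    using measurable_cong_sets[OF assms(1) refl] by (simp add: comp_def) blast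
qed

lemma continuous_on_lipschitz_loss:
  "(\<And>u u'. \<bar>d y u - d y u'\<bar> \<le> \<bar>u - u'\<bar>) \<Longrightarrow> continuous_on UNIV (\<lambda>\<theta>. d y (net ds k \<theta> x 0))"
proof -
  assume "\<And>u u'. \<bar>d y u - d y u'\<bar> \<le> \<bar>u - u'\<bar>"
  then have "continuous_on UNIV (d y)"
    by (intro lipschitz_on_continuous_on[where L = 1]) (simp add: lipschitz_on_def dist_real_def)
  from continuous_on_compose2[OF this continuous_on_net_param] show ?thesis
    by simp
qed

lemma continuous_on_expected_net_loss:
  assumes "finite_measure D" "sets D = sets (borel \<Otimes>\<^sub>M borel)"
    and "(\<lambda>(y, u). d y u) \<in> borel_measurable (borel \<Otimes>\<^sub>M borel)"
    and "AE z in D. z \<in> X \<times> Y" "\<And>y u. y \<in> Y \<Longrightarrow> 0 \<le> d y u \<and> d y u \<le> 1"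
    and "\<And>y u u'. y \<in> Y \<Longrightarrow> \<bar>d y u - d y u'\<bar> \<le> \<bar>u - u'\<bar>"
  shows "continuous_on UNIV (\<lambda>\<theta>. \<integral>z. d (snd z) (net ds k \<theta> (fst z) 0) \<partial>D)"
proof (rule continuous_on_integral_dominated[where w = "\<lambda>_. 1"])
  show "(\<lambda>z. d (snd z) (net ds k \<theta> (fst z) 0)) \<in> borel_measurable D" for \<theta>
    using assms(2,3) by (rule net_loss_measurable)
  show "AE z in D. continuous_on UNIV (\<lambda>\<theta>. d (snd z) (net ds k \<theta> (fst z) 0))"
    using assms(4) by eventually_elim (auto intro!: continuous_on_lipschitz_loss assms(6))
  show "AE z in D. \<bar>d (snd z) (net ds k \<theta> (fst z) 0)\<bar> \<le> 1" for \<theta>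
    using assms(4)
  proof eventually_elim
    case (elim z)
    then have "snd z \<in> Y"
      by auto
    then show ?case
      using assms(5)[of "snd z" "net ds k \<theta> (fst z) 0"] by simp
  qed
  show "integrable D (\<lambda>_. 1 :: real)"
    using assms(1) by (rule finite_measure.integrable_const)
qed

lemma AE_sample_in:
  fixes n :: nat
  assumes "prob_space D" "AE z in D. z \<in> S"
  shows "AE x in PiM {..<n} (\<lambda>_. D). \<forall>i<n. x i \<in> S"
proof -
  have "AE x in PiM {..<n} (\<lambda>_. D). \<forall>i\<in>{..<n}. x i \<in> S"
    using assms by (intro eventually_ball_finite ballI AE_PiM_component) auto
  then show ?thesis
    by (rule eventually_mono) simp
qed

lemma expected_net_loss_le_on_closure:
  assumes "finite_measure D" "sets D = sets (borel \<Otimes>\<^sub>M borel)"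
    and "(\<lambda>(y, u). d y u) \<in> borel_measurable (borel \<Otimes>\<^sub>M borel)"
    and "AE z in D. z \<in> X \<times> Y" "\<And>y u. y \<in> Y \<Longrightarrow> 0 \<le> d y u \<and> d y u \<le> 1"
    and d_lip: "\<And>y u u'. y \<in> Y \<Longrightarrow> \<bar>d y u - d y u'\<bar> \<le> \<bar>u - u'\<bar>"
    and S: "\<forall>i<n. S i \<in> X \<times> Y"
    and bound: "\<And>\<theta>. \<theta> \<in> C0 \<Longrightarrow> (\<integral>z. d (snd z) (net ds k \<theta> (fst z) 0) \<partial>D)
      \<le> (1 / real n) * (\<Sum>i<n. d (snd (S i)) (net ds k \<theta> (fst (S i)) 0)) + b"
  shows "\<theta> \<in> closure C0 \<Longrightarrow> (\<integral>z. d (snd z) (net ds k \<theta> (fst z) 0) \<partial>D)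
      \<le> (1 / real n) * (\<Sum>i<n. d (snd (S i)) (net ds k \<theta> (fst (S i)) 0)) + b"
proof -
  have "closed {\<theta>. (\<integral>z. d (snd z) (net ds k \<theta> (fst z) 0) \<partial>D)
      \<le> (1 / real n) * (\<Sum>i<n. d (snd (S i)) (net ds k \<theta> (fst (S i)) 0)) + b}"
  proof (rule closed_Collect_le)
    show "continuous_on UNIV (\<lambda>\<theta>. \<integral>z. d (snd z) (net ds k \<theta> (fst z) 0) \<partial>D)"
      using assms(1-6) by (rule continuous_on_expected_net_loss)
    show "continuous_on UNIV (\<lambda>\<theta>. (1 / real n) * (\<Sum>i<n. d (snd (S i)) (net ds k \<theta> (fst (S i)) 0)) + b)"
      using S d_lip by (intro continuous_on_add continuous_on_mult continuous_on_const continuous_on_sum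
          continuous_on_lipschitz_loss) (auto simp: mem_Times_iff)
  qed
  moreover have "C0 \<subseteq> {\<theta>. (\<integral>z. d (snd z) (net ds k \<theta> (fst z) 0) \<partial>D)
      \<le> (1 / real n) * (\<Sum>i<n. d (snd (S i)) (net ds k \<theta> (fst (S i)) 0)) + b}"
    using bound by blast
  ultimately show "\<theta> \<in> closure C0 \<Longrightarrow> ?thesis"
    using closure_minimal by blast
qed

locale relu_net_learning =
  fixes m1 k n :: nat and dh :: "nat list" and Y :: "real set"
    and D :: "((nat \<Rightarrow> real) \<times> real) measure" and d :: "real \<Rightarrow> real \<Rightarrow> real"
    and q :: ereal and c co a0 :: real
  assumes m1: "m1 \<ge> 1" and D_prob: "prob_space D" and D_sets: "sets D = sets (borel \<Otimes>\<^sub>M borel)"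
    and D_supp: "AE z in D. z \<in> cube m1 \<times> Y"
    and d_meas: "(\<lambda>(y, u). d y u) \<in> borel_measurable (borel \<Otimes>\<^sub>M borel)"
    and d_range: "\<And>y u. y \<in> Y \<Longrightarrow> 0 \<le> d y u \<and> d y u \<le> 1"
    and d_lip: "\<And>y u u'. y \<in> Y \<Longrightarrow> \<bar>d y u - d y u'\<bar> \<le> \<bar>u - u'\<bar>"
    and q: "1 \<le> q" and c: "c > 0" and co: "co > 0" and dh: "length dh = k"
    and a0: "a0 \<ge> 1" "c ^ k \<le> a0" and n: "n \<ge> 1"
begin

interpretation D: prob_space D
  by (rule D_prob)

definition ds :: "nat list" where
  "ds = m1 # dh @ [1]"

text \<open>Since \<open>d\<close> is bounded only on \<open>Y\<close>, symmetrization is applied to the loss clipped to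
  \<open>[0, 1]\<close>, which agrees with \<open>d\<close> on the support of \<open>D\<close>.\<close>

definition loss :: "(nat \<Rightarrow> layer) \<Rightarrow> (nat \<Rightarrow> real) \<times> real \<Rightarrow> real" where
  "loss \<theta> z = max 0 (min 1 (d (snd z) (net ds k \<theta> (fst z) 0)))"

lemma loss_eq: "z \<in> cube m1 \<times> Y \<Longrightarrow> loss \<theta> z = d (snd z) (net ds k \<theta> (fst z) 0)"
  using d_range[of "snd z"] unfolding loss_def by (auto simp: mem_Times_iff)

lemma loss_measurable: "loss \<theta> \<in> borel_measurable D"
  unfolding loss_def using net_loss_measurable[OF D_sets d_meas] by measurable

lemma integral_loss: "(\<integral>z. loss \<theta> z \<partial>D) = (\<integral>z. d (snd z) (net ds k \<theta> (fst z) 0) \<partial>D)"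
  using D_supp by (intro integral_cong_AE loss_measurable net_loss_measurable[OF D_sets d_meas])
    (auto simp: loss_eq elim: AE_mp)

lemma sum_loss:
  "\<forall>i<n. S i \<in> cube m1 \<times> Y \<Longrightarrow> (\<Sum>i<n. loss \<theta> (S i)) = (\<Sum>i<n. d (snd (S i)) (net ds k \<theta> (fst (S i)) 0))"
  by (intro sum.cong) (auto simp: loss_eq)

lemma clipped_generalization:
  assumes C0: "countable C0" "net ds k ` C0 \<subseteq> relu_nets k ds 1 q c co" and "0 < \<delta>" "\<delta> < 1"
  shows "\<exists>A\<in>sets (PiM {..<n} (\<lambda>_. D)). measure (PiM {..<n} (\<lambda>_. D)) A \<ge> 1 - \<delta> \<and>
    (\<forall>S\<in>A. (\<forall>i<n. S i \<in> cube m1 \<times> Y) \<and> (\<forall>\<theta>\<in>C0. (\<integral>z. loss \<theta> z \<partial>D)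
       \<le> (\<Sum>i<n. loss \<theta> (S i)) / real n + sqrt (ln (1 / \<delta>) / (2 * real n))
         + 2 * (2 * (co * a0) * sqrt (real n) * sqrt (real k + 2 + ln (real m1 + 1))) / real n))"
proof (rule rademacher_generalization_bound)
  show "AE S in PiM {..<n} (\<lambda>_. D). \<forall>i<n. S i \<in> cube m1 \<times> Y"
    using D_prob D_supp by (rule AE_sample_in)
  show "sign_avg n (\<lambda>e. Sup ((\<lambda>\<theta>. \<Sum>i<n. e i * loss \<theta> (S i)) ` C0))
      \<le> 2 * (co * a0) * sqrt (real n) * sqrt (real k + 2 + ln (real m1 + 1))"
    if "\<forall>i<n. S i \<in> cube m1 \<times> Y" "C0 \<noteq> {}" for S
    using sign_avg_Sup_relu_net_loss_le[OF that(1) d_lip C0(2)[unfolded ds_def]] that(2) m1 c co n a0 q dh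
    by (simp add: loss_def image_image ds_def)
  show "0 \<le> loss \<theta> z" "loss \<theta> z \<le> 1" for \<theta> z
    unfolding loss_def by auto
qed (use assms D_prob n loss_measurable in auto)

lemma countable_generalization:
  assumes "countable C0" "net ds k ` C0 \<subseteq> relu_nets k ds 1 q c co" "0 < \<delta>" "\<delta> < 1"
  shows "\<exists>A\<in>sets (PiM {..<n} (\<lambda>_. D)). measure (PiM {..<n} (\<lambda>_. D)) A \<ge> 1 - \<delta> \<and>
    (\<forall>S\<in>A. (\<forall>i<n. S i \<in> cube m1 \<times> Y) \<and> (\<forall>\<theta>\<in>C0. (\<integral>z. d (snd z) (net ds k \<theta> (fst z) 0) \<partial>D)
       \<le> (1 / real n) * (\<Sum>i<n. d (snd (S i)) (net ds k \<theta> (fst (S i)) 0))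
         + (sqrt (ln (1 / \<delta>) / (2 * real n))
            + 4 * co * a0 / sqrt (real n) * sqrt (real k + 2 + ln (real m1 + 1)))))"
proof -
  from clipped_generalization[OF assms] obtain A where A: "A \<in> sets (PiM {..<n} (\<lambda>_. D))"
    "measure (PiM {..<n} (\<lambda>_. D)) A \<ge> 1 - \<delta>"
    "\<forall>S\<in>A. (\<forall>i<n. S i \<in> cube m1 \<times> Y) \<and> (\<forall>\<theta>\<in>C0. (\<integral>z. loss \<theta> z \<partial>D)
       \<le> (\<Sum>i<n. loss \<theta> (S i)) / real n + sqrt (ln (1 / \<delta>) / (2 * real n))
         + 2 * (2 * (co * a0) * sqrt (real n) * sqrt (real k + 2 + ln (real m1 + 1))) / real n)"
    by blast
  have R: "2 * (2 * (co * a0) * sqrt (real n) * sqrt K) / real n = 4 * co * a0 / sqrt (real n) * sqrt K" for K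
    using n real_sqrt_mult_self[of "real n"] by (simp add: field_simps)
  show ?thesis
  proof (rule bexI[OF _ A(1)], intro conjI ballI)
    show "measure (PiM {..<n} (\<lambda>_. D)) A \<ge> 1 - \<delta>"
      by (rule A(2))
    show "\<forall>i<n. S i \<in> cube m1 \<times> Y" if "S \<in> A" for S
      using A(3) that by blast
    show "(\<integral>z. d (snd z) (net ds k \<theta> (fst z) 0) \<partial>D)
       \<le> (1 / real n) * (\<Sum>i<n. d (snd (S i)) (net ds k \<theta> (fst (S i)) 0))
         + (sqrt (ln (1 / \<delta>) / (2 * real n))
            + 4 * co * a0 / sqrt (real n) * sqrt (real k + 2 + ln (real m1 + 1)))"
      if "S \<in> A" "\<theta> \<in> C0" for S \<theta>
    proof -
      have "\<forall>i<n. S i \<in> cube m1 \<times> Y"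
        using A(3) that(1) by blast
      moreover have "(\<integral>z. loss \<theta> z \<partial>D) \<le> (\<Sum>i<n. loss \<theta> (S i)) / real n + sqrt (ln (1 / \<delta>) / (2 * real n))
         + 2 * (2 * (co * a0) * sqrt (real n) * sqrt (real k + 2 + ln (real m1 + 1))) / real n"
        using A(3) that by blast
      ultimately show ?thesis
        by (simp only: R) (simp add: integral_loss sum_loss add.assoc)
    qed
  qed
qed


lemma dense_generalization:
  assumes C0: "countable C0" "net ds k ` C0 \<subseteq> relu_nets k ds 1 q c co" and "0 < \<delta>" "\<delta> < 1"
  shows "\<exists>A\<in>sets (PiM {..<n} (\<lambda>_. D)). measure (PiM {..<n} (\<lambda>_. D)) A \<ge> 1 - \<delta> \<and>
    (\<forall>S\<in>A. \<forall>\<theta>\<in>closure C0. (\<integral>z. d (snd z) (net ds k \<theta> (fst z) 0) \<partial>D)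
       \<le> (1 / real n) * (\<Sum>i<n. d (snd (S i)) (net ds k \<theta> (fst (S i)) 0))
         + (sqrt (ln (1 / \<delta>) / (2 * real n))
            + 4 * co * a0 / sqrt (real n) * sqrt (real k + 2 + ln (real m1 + 1))))"
proof -
  from countable_generalization[OF assms] obtain A where A: "A \<in> sets (PiM {..<n} (\<lambda>_. D))"
    "measure (PiM {..<n} (\<lambda>_. D)) A \<ge> 1 - \<delta>"
    "\<forall>S\<in>A. (\<forall>i<n. S i \<in> cube m1 \<times> Y) \<and> (\<forall>\<theta>\<in>C0. (\<integral>z. d (snd z) (net ds k \<theta> (fst z) 0) \<partial>D)
       \<le> (1 / real n) * (\<Sum>i<n. d (snd (S i)) (net ds k \<theta> (fst (S i)) 0))
         + (sqrt (ln (1 / \<delta>) / (2 * real n))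
            + 4 * co * a0 / sqrt (real n) * sqrt (real k + 2 + ln (real m1 + 1))))"
    by blast
  show ?thesis
  proof (intro bexI[OF _ A(1)] conjI ballI)
    fix S \<theta> assume "S \<in> A" "\<theta> \<in> closure C0"
    with A(3) show "(\<integral>z. d (snd z) (net ds k \<theta> (fst z) 0) \<partial>D)
       \<le> (1 / real n) * (\<Sum>i<n. d (snd (S i)) (net ds k \<theta> (fst (S i)) 0))
         + (sqrt (ln (1 / \<delta>) / (2 * real n))
            + 4 * co * a0 / sqrt (real n) * sqrt (real k + 2 + ln (real m1 + 1)))"
      using expected_net_loss_le_on_closure[OF prob_space.axioms(1)[OF D_prob] D_sets d_meas D_supp
          d_range d_lip] by blast
  qed (rule A(2))
qed
end

theorem mainTheorem11:
  fixes m1 k n :: nat and dh :: "nat list" and Y :: "real set"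
    and D :: "((nat \<Rightarrow> real) \<times> real) measure"
    and d :: "real \<Rightarrow> real \<Rightarrow> real"
    and q :: ereal and c co \<delta> a0 :: real
  assumes m1: "m1 \<ge> 1"
    and D_prob: "prob_space D"
    and D_sets: "sets D = sets (borel \<Otimes>\<^sub>M borel)"
    and D_supp: "AE z in D. z \<in> cube m1 \<times> Y"
    and d_meas: "(\<lambda>(y, u). d y u) \<in> borel_measurable (borel \<Otimes>\<^sub>M borel)"
    and d_range: "\<And>y u. y \<in> Y \<Longrightarrow> 0 \<le> d y u \<and> d y u \<le> 1"
    and d_lip: "\<And>y u u'. y \<in> Y \<Longrightarrow> \<bar>d y u - d y u'\<bar> \<le> \<bar>u - u'\<bar>"
    and q: "1 \<le> q"
    and c: "c > 0" and co: "co > 0"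
    and dh: "length dh = k" "\<forall>w\<in>set dh. w \<ge> 1"
    and \<delta>: "0 < \<delta>" "\<delta> < 1"
    and a0: "a0 \<ge> 1" "c ^ k \<le> a0"
    and n: "n \<ge> 1"
  shows "\<exists>A \<in> sets (PiM {..<n} (\<lambda>_. D)).
           measure (PiM {..<n} (\<lambda>_. D)) A \<ge> 1 - \<delta> \<and>
           (\<forall>S\<in>A. \<forall>F\<in>relu_nets k (m1 # dh @ [1]) 1 q c co.
              (\<integral>z. d (snd z) (F (fst z) 0) \<partial>D)
                \<le> (1 / real n) * (\<Sum>i<n. d (snd (S i)) (F (fst (S i)) 0))
                  + sqrt (ln (1 / \<delta>) / (2 * real n))
                  + 4 * co * a0 / sqrt (real n) * sqrt (real k + 2 + ln (real m1 + 1)))"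
proof -
  interpret relu_net_learning m1 k n dh Y D d q c co a0
    by (rule relu_net_learning.intro) (fact m1 D_prob D_sets D_supp d_meas d_range d_lip q c co dh(1) a0 n)+
  define \<Theta> where "\<Theta> = {\<theta>. (\<forall>i<k. pq_norm 1 q (ds ! i) (ds ! Suc i) (\<theta> i) = c) \<and>
    pq_norm 1 q (ds ! k) (ds ! Suc k) (\<theta> k) \<le> co}"
  have nets: "relu_nets k ds 1 q c co = net ds k ` \<Theta>"
    unfolding \<Theta>_def using dh(1) by (intro relu_nets_eq_image_net) (simp add: ds_def)
  obtain C0 where C0: "countable C0" "C0 \<subseteq> \<Theta>" "\<Theta> \<subseteq> closure C0"
    using separable by blast
  have "net ds k ` C0 \<subseteq> relu_nets k ds 1 q c co"
    using C0(2) unfolding nets by (rule image_mono)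
  from dense_generalization[OF C0(1) this \<delta>] obtain A where A: "A \<in> sets (PiM {..<n} (\<lambda>_. D))"
    "measure (PiM {..<n} (\<lambda>_. D)) A \<ge> 1 - \<delta>"
    "\<forall>S\<in>A. \<forall>\<theta>\<in>closure C0. (\<integral>z. d (snd z) (net ds k \<theta> (fst z) 0) \<partial>D)
       \<le> (1 / real n) * (\<Sum>i<n. d (snd (S i)) (net ds k \<theta> (fst (S i)) 0))
         + (sqrt (ln (1 / \<delta>) / (2 * real n))
            + 4 * co * a0 / sqrt (real n) * sqrt (real k + 2 + ln (real m1 + 1)))"
    by blast
  have "relu_nets k (m1 # dh @ [1]) 1 q c co \<subseteq> net ds k ` closure C0"
    using nets C0(3) unfolding ds_def by blast
  with A show ?thesis
    by (intro bexI[OF _ A(1)]) (fastforce simp: add.assoc)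
qed

end
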